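(* Let $G=r_{\max}+2R$. The iterates $\theta_1,\dots,\theta_T$ of the MLMC-AdaGrad projected TD algorithm satisfy \[ \mathbb{E}\big[\|V_{\theta^*}-V_{\bar\theta_T}\|_M^2\big]\le\tilde{\mathcal{O}}\Big(\frac{GR\sqrt{\tau_{\mathrm{mix}}}}{(1-\gamma)\sqrt T}\Big),\qquad \bar\theta_T=\frac1T\sum_{t=1}^T\theta_t. \]
   Context: Consider a Markov reward process on a finite state space $\mathcal{S}$ with transition kernel $\mathcal{P}^\pi$, reward function $\mathcal{R}^\pi(s,s')\in[-r_{\max},r_{\max}]$ and discount $\gamma\in[0,1)$; its state chain is ergodic with unique stationary distribution $\mu$. Observed samples are triplets $z=(s,r,s')$ with $r=\mathcal{R}^\pi(s,s')$, $s'\sim\mathcal{P}^\pi(\cdot\mid s)$, forming a Markov chain $(z_k)_{k\ge1}$; $\tau_{\mathrm{mix}}$ is its mixing time: with $\|P-Q\|_{TV}=\sup_A|P(A)-Q(A)|$, $P^s(z,\cdot)$ the law of $z_{s+1}$ given $z_1=z$ and $d_{\mathrm{mix}}(s)=\sup_z\|P^s(z,\cdot)-\nu\|_{TV}$ ($\nu$ the stationary law), $\tau_{\mathrm{mix}}=\inf\{s:d_{\mathrm{mix}}(s)\le1/4\}$. Features $\phi:\mathcal{S}\to\mathbb{R}^d$ satisfy $\|\phi(s)\|\le1$; $V_\theta(s)=\phi(s)^\top\theta$; $M=\mathrm{diag}(\mu(s))_{s\in\mathcal{S}}$ and $\|V\|_M^2=\sum_s\mu(s)V(s)^2$. Semi-gradient: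 $g(\theta;z)=(r+\gamma\phi(s')^\top\theta-\phi(s)^\top\theta)\phi(s)$, and $\bar g(\theta)=\mathbb{E}_{s\sim\mu,\,s'\sim\mathcal{P}^\pi(\cdot|s)}[(\mathcal{R}^\pi(s,s')+\gamma\phi(s')^\top\theta-\phi(s)^\top\theta)\phi(s)]$. $\theta^*$ satisfies $\bar g(\theta^* )=0$, and $R>0$ satisfies $\|\theta^*\|\le R$; $\mathcal{K}=\{\theta:\|\theta\|\le R\}$. Algorithm (inputs $T$, $\theta_1\in\mathcal{K}$): for $t=1,\dots,T$: draw $J_t$ with $\mathbb{P}(J_t=j)=2^{-j}$, $j\ge1$, independently of the chain and previous draws; $N_t=2^{J_t}$; iteration $t$ uses the next $N_t$ samples $z_t^{(i)}=z_{S_{t-1}+i}$, $S_{t-1}=N_1+\dots+N_{t-1}$; $g_t^j=2^{-j}\sum_{i=1}^{2^j}g(\theta_t;z_t^{(i)})$ for $j\ge0$; $g_t=g_t^0+2^{J_t}(g_t^{J_t}-g_t^{J_t-1})$ if $2^{J_t}\le T$, else $g_t=g_t^0$; $\eta_t=\sqrt2R/\sqrt{\sum_{k=1}^t\|g_k\|^2}$; $\theta_{t+1}=\Pi_{\mathcal{K}}(\theta_t+\eta_tg_t)$ (Euclidean projection). The notation $\tilde{\mathcal{O}}(X)$ means a quantity bounded by $c\cdot X$ times a factor polylogarithmic in $T$ and $\tau_{\mathrm{mix}}$, with $c$ an absolute constant. *)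

theory Defs
  imports "HOL-Probability.Probability"
begin

type_synonym sample = "nat \<times> real \<times> nat"  (* triplet z = (s, r, s') *)

primrec stepn :: "(nat \<Rightarrow> nat pmf) \<Rightarrow> nat \<Rightarrow> nat \<Rightarrow> nat pmf" where
  "stepn P 0 s = return_pmf s"
| "stepn P (Suc n) s = bind_pmf (stepn P n s) P"

definition irreducible_on :: "nat set \<Rightarrow> (nat \<Rightarrow> nat pmf) \<Rightarrow> bool" where
  "irreducible_on S P \<longleftrightarrow> (\<forall>s\<in>S. \<forall>t\<in>S. \<exists>n. t \<in> set_pmf (stepn P n s))"

definition aperiodic_on :: "nat set \<Rightarrow> (nat \<Rightarrow> nat pmf) \<Rightarrow> bool" where
  "aperiodic_on S P \<longleftrightarrow> (\<forall>s\<in>S. Gcd {n. 0 < n \<and> s \<in> set_pmf (stepn P n s)} = 1)"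

definition ergodic_on :: "nat set \<Rightarrow> (nat \<Rightarrow> nat pmf) \<Rightarrow> bool" where
  "ergodic_on S P \<longleftrightarrow> irreducible_on S P \<and> aperiodic_on S P"

definition stationary_on :: "nat set \<Rightarrow> (nat \<Rightarrow> nat pmf) \<Rightarrow> nat pmf \<Rightarrow> bool" where
  "stationary_on S P \<mu> \<longleftrightarrow> set_pmf \<mu> \<subseteq> S \<and> bind_pmf \<mu> P = \<mu>"

definition zstep :: "(nat \<Rightarrow> nat pmf) \<Rightarrow> (nat \<Rightarrow> nat \<Rightarrow> real) \<Rightarrow> sample \<Rightarrow> sample pmf" where
  "zstep P Rw z = (case z of (s, r, s') \<Rightarrow> map_pmf (\<lambda>s''. (s', Rw s' s'', s'')) (P s'))"

primrec zstepn :: "(nat \<Rightarrow> nat pmf) \<Rightarrow> (nat \<Rightarrow> nat \<Rightarrow> real) \<Rightarrow> nat \<Rightarrow> sample \<Rightarrow> sample pmf" where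
  "zstepn P Rw 0 z = return_pmf z"
| "zstepn P Rw (Suc n) z = bind_pmf (zstepn P Rw n z) (zstep P Rw)"

definition zstat :: "(nat \<Rightarrow> nat pmf) \<Rightarrow> (nat \<Rightarrow> nat \<Rightarrow> real) \<Rightarrow> nat pmf \<Rightarrow> sample pmf" where
  "zstat P Rw \<mu> = bind_pmf \<mu> (\<lambda>s. map_pmf (\<lambda>s'. (s, Rw s s', s')) (P s))"

definition tv_dist :: "'b pmf \<Rightarrow> 'b pmf \<Rightarrow> real" where
  "tv_dist p q = (SUP A. \<bar>measure_pmf.prob p A - measure_pmf.prob q A\<bar>)"

definition dmix :: "nat set \<Rightarrow> (nat \<Rightarrow> nat pmf) \<Rightarrow> (nat \<Rightarrow> nat \<Rightarrow> real) \<Rightarrow> nat pmf \<Rightarrow> nat \<Rightarrow> real" where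
  "dmix S P Rw \<mu> n = (SUP z \<in> S \<times> UNIV \<times> S. tv_dist (zstepn P Rw n z) (zstat P Rw \<mu>))"

definition tau_mix :: "nat set \<Rightarrow> (nat \<Rightarrow> nat pmf) \<Rightarrow> (nat \<Rightarrow> nat \<Rightarrow> real) \<Rightarrow> nat pmf \<Rightarrow> nat" where
  "tau_mix S P Rw \<mu> = Inf {n. dmix S P Rw \<mu> n \<le> 1/4}"

section \<open>Vectors of R^d, represented as nat \<Rightarrow> real vanishing from index d on\<close>

definition vinner :: "nat \<Rightarrow> (nat \<Rightarrow> real) \<Rightarrow> (nat \<Rightarrow> real) \<Rightarrow> real" where
  "vinner d x y = (\<Sum>i<d. x i * y i)"

definition vnorm :: "nat \<Rightarrow> (nat \<Rightarrow> real) \<Rightarrow> real" where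
  "vnorm d x = sqrt (vinner d x x)"

definition inRd :: "nat \<Rightarrow> (nat \<Rightarrow> real) \<Rightarrow> bool" where
  "inRd d x \<longleftrightarrow> (\<forall>i\<ge>d. x i = 0)"

definition Kball :: "nat \<Rightarrow> real \<Rightarrow> (nat \<Rightarrow> real) set" where
  "Kball d R = {x. inRd d x \<and> vnorm d x \<le> R}"

definition proj :: "nat \<Rightarrow> real \<Rightarrow> (nat \<Rightarrow> real) \<Rightarrow> (nat \<Rightarrow> real)" where
  "proj d R x = (THE y. y \<in> Kball d R \<and>
      (\<forall>y' \<in> Kball d R. vnorm d (\<lambda>i. y i - x i) \<le> vnorm d (\<lambda>i. y' i - x i)))"

definition Vf :: "nat \<Rightarrow> (nat \<Rightarrow> nat \<Rightarrow> real) \<Rightarrow> (nat \<Rightarrow> real) \<Rightarrow> nat \<Rightarrow> real" where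
  "Vf d \<phi> \<theta> s = vinner d (\<phi> s) \<theta>"

definition sgrad :: "nat \<Rightarrow> (nat \<Rightarrow> nat \<Rightarrow> real) \<Rightarrow> real \<Rightarrow> (nat \<Rightarrow> real) \<Rightarrow> sample \<Rightarrow> (nat \<Rightarrow> real)" where
  "sgrad d \<phi> \<gamma> \<theta> z = (case z of (s, r, s') \<Rightarrow>
      (\<lambda>i. (r + \<gamma> * Vf d \<phi> \<theta> s' - Vf d \<phi> \<theta> s) * \<phi> s i))"

definition gbar :: "nat set \<Rightarrow> (nat \<Rightarrow> nat pmf) \<Rightarrow> (nat \<Rightarrow> nat \<Rightarrow> real) \<Rightarrow> nat pmf \<Rightarrow> nat \<Rightarrow>
    (nat \<Rightarrow> nat \<Rightarrow> real) \<Rightarrow> real \<Rightarrow> (nat \<Rightarrow> real) \<Rightarrow> (nat \<Rightarrow> real)" where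
  "gbar S P Rw \<mu> d \<phi> \<gamma> \<theta> = (\<lambda>i. \<Sum>s\<in>S. \<Sum>s'\<in>S. pmf \<mu> s * pmf (P s) s' *
      ((Rw s s' + \<gamma> * Vf d \<phi> \<theta> s' - Vf d \<phi> \<theta> s) * \<phi> s i))"

definition errM :: "nat set \<Rightarrow> nat pmf \<Rightarrow> nat \<Rightarrow> (nat \<Rightarrow> nat \<Rightarrow> real) \<Rightarrow> (nat \<Rightarrow> real) \<Rightarrow> (nat \<Rightarrow> real) \<Rightarrow> real" where
  "errM S \<mu> d \<phi> \<theta>1 \<theta>2 = (\<Sum>s\<in>S. pmf \<mu> s * (Vf d \<phi> \<theta>1 s - Vf d \<phi> \<theta>2 s)^2)"

primrec samples :: "(nat \<Rightarrow> nat pmf) \<Rightarrow> (nat \<Rightarrow> nat \<Rightarrow> real) \<Rightarrow> nat \<Rightarrow> nat \<Rightarrow> (sample list \<times> nat) pmf" where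
  "samples P Rw 0 s = return_pmf ([], s)"
| "samples P Rw (Suc n) s = bind_pmf (P s) (\<lambda>s'.
      map_pmf (\<lambda>(zs, e). ((s, Rw s s', s') # zs, e)) (samples P Rw n s'))"

definition gavg :: "nat \<Rightarrow> (nat \<Rightarrow> nat \<Rightarrow> real) \<Rightarrow> real \<Rightarrow> (nat \<Rightarrow> real) \<Rightarrow> sample list \<Rightarrow> nat \<Rightarrow> (nat \<Rightarrow> real)" where
  "gavg d \<phi> \<gamma> \<theta> zs j = (\<lambda>i. (1 / 2^j) * (\<Sum>k<2^j. sgrad d \<phi> \<gamma> \<theta> (zs ! k) i))"

definition mlmc_grad :: "nat \<Rightarrow> nat \<Rightarrow> (nat \<Rightarrow> nat \<Rightarrow> real) \<Rightarrow> real \<Rightarrow> (nat \<Rightarrow> real) \<Rightarrow> sample list \<Rightarrow> nat \<Rightarrow> (nat \<Rightarrow> real)" where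
  "mlmc_grad T d \<phi> \<gamma> \<theta> zs J =
     (if 2^J \<le> T
      then (\<lambda>i. gavg d \<phi> \<gamma> \<theta> zs 0 i + 2^J * (gavg d \<phi> \<gamma> \<theta> zs J i - gavg d \<phi> \<gamma> \<theta> zs (J - 1) i))
      else gavg d \<phi> \<gamma> \<theta> zs 0)"

text \<open>algorithm state at the start of iteration t:
  (next chain state, theta_t, sum_{k<t} norm g_k ^2, sum_{k<t} theta_k)\<close>
type_synonym alg_state = "nat \<times> (nat \<Rightarrow> real) \<times> real \<times> (nat \<Rightarrow> real)"

definition alg_step :: "(nat \<Rightarrow> nat pmf) \<Rightarrow> (nat \<Rightarrow> nat \<Rightarrow> real) \<Rightarrow> nat \<Rightarrow> (nat \<Rightarrow> nat \<Rightarrow> real) \<Rightarrow> real \<Rightarrow>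
    real \<Rightarrow> nat \<Rightarrow> alg_state \<Rightarrow> alg_state pmf" where
  "alg_step P Rw d \<phi> \<gamma> R T st = (case st of (s, \<theta>, Q, acc) \<Rightarrow>
     bind_pmf (map_pmf Suc (geometric_pmf (1/2))) (\<lambda>J.
     map_pmf (\<lambda>(zs, s_next).
        let g = mlmc_grad T d \<phi> \<gamma> \<theta> zs J;
            Q' = Q + (vnorm d g)^2;
            \<eta> = sqrt 2 * R / sqrt Q'
        in (s_next, proj d R (\<lambda>i. \<theta> i + \<eta> * g i), Q', (\<lambda>i. acc i + \<theta> i)))
       (samples P Rw (2^J) s)))"

primrec alg_run :: "(nat \<Rightarrow> nat pmf) \<Rightarrow> (nat \<Rightarrow> nat \<Rightarrow> real) \<Rightarrow> nat \<Rightarrow> (nat \<Rightarrow> nat \<Rightarrow> real) \<Rightarrow> real \<Rightarrow>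
    real \<Rightarrow> nat \<Rightarrow> nat pmf \<Rightarrow> (nat \<Rightarrow> real) \<Rightarrow> nat \<Rightarrow> alg_state pmf" where
  "alg_run P Rw d \<phi> \<gamma> R T \<xi> \<theta>1 0 = map_pmf (\<lambda>s. (s, \<theta>1, 0, (\<lambda>i. 0))) \<xi>"
| "alg_run P Rw d \<phi> \<gamma> R T \<xi> \<theta>1 (Suc n) =
     bind_pmf (alg_run P Rw d \<phi> \<gamma> R T \<xi> \<theta>1 n) (alg_step P Rw d \<phi> \<gamma> R T)"

definition avg_iterate :: "(nat \<Rightarrow> nat pmf) \<Rightarrow> (nat \<Rightarrow> nat \<Rightarrow> real) \<Rightarrow> nat \<Rightarrow> (nat \<Rightarrow> nat \<Rightarrow> real) \<Rightarrow> real \<Rightarrow>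
    real \<Rightarrow> nat \<Rightarrow> nat pmf \<Rightarrow> (nat \<Rightarrow> real) \<Rightarrow> (nat \<Rightarrow> real) pmf" where
  "avg_iterate P Rw d \<phi> \<gamma> R T \<xi> \<theta>1 =
     map_pmf (\<lambda>(s, \<theta>, Q, acc). (\<lambda>i. acc i / real T)) (alg_run P Rw d \<phi> \<gamma> R T \<xi> \<theta>1 T)"

definition td_setting :: "nat set \<Rightarrow> (nat \<Rightarrow> nat pmf) \<Rightarrow> (nat \<Rightarrow> nat \<Rightarrow> real) \<Rightarrow> real \<Rightarrow> real \<Rightarrow>
    nat pmf \<Rightarrow> nat \<Rightarrow> (nat \<Rightarrow> nat \<Rightarrow> real) \<Rightarrow> real \<Rightarrow> (nat \<Rightarrow> real) \<Rightarrow> bool" where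
  "td_setting S P Rw rmax \<gamma> \<mu> d \<phi> R \<theta>s \<longleftrightarrow>
     finite S \<and> S \<noteq> {} \<and> (\<forall>s\<in>S. set_pmf (P s) \<subseteq> S)
   \<and> (\<forall>s\<in>S. \<forall>s'\<in>S. \<bar>Rw s s'\<bar> \<le> rmax)
   \<and> 0 \<le> \<gamma> \<and> \<gamma> < 1
   \<and> ergodic_on S P
   \<and> stationary_on S P \<mu> \<and> (\<forall>\<mu>'. stationary_on S P \<mu>' \<longrightarrow> \<mu>' = \<mu>)
   \<and> (\<forall>s\<in>S. inRd d (\<phi> s) \<and> vnorm d (\<phi> s) \<le> 1)
   \<and> inRd d \<theta>s \<and> gbar S P Rw \<mu> d \<phi> \<gamma> \<theta>s = (\<lambda>i. 0)
   \<and> 0 < R \<and> vnorm d \<theta>s \<le> R"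

end

(*
  The sample chain z_k = (s_k, r_k, s_(k+1)) inherits irreducibility and aperiodicity on the finite
  state set, so some power of the transition kernel charges every pair of states (numerical
  semigroups).  This Doeblin minorisation, together with Dobrushin's contraction of the total
  variation distance, makes the mixing distance decay geometrically, dmix (k * tau_mix) <= 2^-k,
  and the mixing distances sum to at most 2 tau_mix.  Hence an average of N consecutive
  semi-gradients has bias O(G tau_mix / N) and mean squared deviation O(G^2 tau_mix / N) around the
  mean-path semi-gradient gbar.

  The multilevel correction telescopes, so the MLMC gradient g_t has the bias of an average over
  2^floor_log T samples, O(G tau_mix / T), while its second moment is only O(G^2 tau_mix log T).
  Projected AdaGrad satisfies the pathwise regret bound
    sum_t <theta* - theta_t, g_t>  <=  2 sqrt 2 R sqrt (sum_t |g_t|^2).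
  Replacing g_t by gbar theta_t costs the bias; TD monotonicity
    (1 - gamma) |V theta* - V theta|_M^2  <=  <theta* - theta, gbar theta>,
  convexity of the error in theta and Jensen's inequality for the square root give the rate.  For
  T < tau_mix the trivial bound 4 R^2 already suffices.
*)

theory Submission
  imports Defs "HOL-Library.Discrete_Functions"
begin

lemma vinner_commute: "vinner d x y = vinner d y x"
  unfolding vinner_def by (simp add: mult.commute)

lemma vinner_add_left: "vinner d (\<lambda>i. x i + y i) z = vinner d x z + vinner d y z"
  unfolding vinner_def by (simp add: distrib_right sum.distrib)

lemma vinner_add_right: "vinner d z (\<lambda>i. x i + y i) = vinner d z x + vinner d z y"
  unfolding vinner_def by (simp add: distrib_left sum.distrib)

lemma vinner_diff_left: "vinner d (\<lambda>i. x i - y i) z = vinner d x z - vinner d y z"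
  unfolding vinner_def by (simp add: left_diff_distrib sum_subtractf)

lemma vinner_diff_right: "vinner d z (\<lambda>i. x i - y i) = vinner d z x - vinner d z y"
  unfolding vinner_def by (simp add: right_diff_distrib sum_subtractf)

lemma vinner_scale_left: "vinner d (\<lambda>i. c * x i) z = c * vinner d x z"
  unfolding vinner_def by (simp add: sum_distrib_left mult.assoc)

lemma vinner_scale_right: "vinner d z (\<lambda>i. c * x i) = c * vinner d z x"
  unfolding vinner_def by (simp add: sum_distrib_left mult.left_commute)

lemma vinner_minus_left: "vinner d (\<lambda>i. - x i) y = - vinner d x y"
  unfolding vinner_def by (simp add: sum_negf)

lemma vinner_sum_left: "vinner d (\<lambda>i. \<Sum>k\<in>A. f k i) y = (\<Sum>k\<in>A. vinner d (f k) y)"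
  unfolding vinner_def by (simp add: sum_distrib_right sum.swap[of _ A])

lemma vinner_sum_right: "vinner d y (\<lambda>i. \<Sum>k\<in>A. f k i) = (\<Sum>k\<in>A. vinner d y (f k))"
  using vinner_sum_left[of d f A y] by (simp add: vinner_commute)

lemma vinner_cong:
  "(\<And>i. i < d \<Longrightarrow> x i = x' i) \<Longrightarrow> (\<And>i. i < d \<Longrightarrow> y i = y' i) \<Longrightarrow> vinner d x y = vinner d x' y'"
  unfolding vinner_def by (rule sum.cong) auto

lemma vinner_self_nonneg: "0 \<le> vinner d x x"
  unfolding vinner_def by (simp add: sum_nonneg)

lemma vnorm_nonneg: "0 \<le> vnorm d x"
  unfolding vnorm_def using vinner_self_nonneg by simp

lemma vnorm_power2: "(vnorm d x)\<^sup>2 = vinner d x x"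
  unfolding vnorm_def using vinner_self_nonneg by simp

lemma vnorm_eq_L2_set: "vnorm d x = L2_set x {..<d}"
  unfolding vnorm_def vinner_def L2_set_def by (simp add: power2_eq_square)

lemma vnorm_cong: "(\<And>i. i < d \<Longrightarrow> x i = x' i) \<Longrightarrow> vnorm d x = vnorm d x'"
  unfolding vnorm_def by (metis vinner_cong)

lemma abs_vinner_le: "\<bar>vinner d x y\<bar> \<le> vnorm d x * vnorm d y"
proof -
  have "\<bar>vinner d x y\<bar> \<le> (\<Sum>i<d. \<bar>x i\<bar> * \<bar>y i\<bar>)"
    unfolding vinner_def by (rule order_trans[OF sum_abs]) (simp add: abs_mult)
  also have "\<dots> \<le> L2_set x {..<d} * L2_set y {..<d}" by (rule L2_set_mult_ineq)
  finally show ?thesis by (simp add: vnorm_eq_L2_set)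
qed

lemma vinner_le: "vinner d x y \<le> vnorm d x * vnorm d y"
  using abs_vinner_le[of d x y] by linarith

lemma abs_vinner_le_bound:
  "vnorm d x \<le> A \<Longrightarrow> vnorm d y \<le> B \<Longrightarrow> \<bar>vinner d x y\<bar> \<le> A * B"
  by (meson abs_vinner_le mult_mono order_trans vnorm_nonneg)

lemma vnorm_triangle: "vnorm d (\<lambda>i. x i + y i) \<le> vnorm d x + vnorm d y"
  unfolding vnorm_eq_L2_set by (rule L2_set_triangle_ineq)

lemma vnorm_scale: "vnorm d (\<lambda>i. c * x i) = \<bar>c\<bar> * vnorm d x"
proof -
  have "vinner d (\<lambda>i. c * x i) (\<lambda>i. c * x i) = c\<^sup>2 * vinner d x x"
    by (simp add: vinner_scale_left vinner_scale_right power2_eq_square)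
  then show ?thesis unfolding vnorm_def by (simp add: real_sqrt_mult)
qed

lemma vnorm_minus: "vnorm d (\<lambda>i. - x i) = vnorm d x"
  using vnorm_scale[of d "-1" x] by simp

lemma vnorm_minus_commute: "vnorm d (\<lambda>i. x i - y i) = vnorm d (\<lambda>i. y i - x i)"
  unfolding vnorm_def vinner_def by (simp add: algebra_simps)

lemma vnorm_diff_le: "vnorm d (\<lambda>i. x i - y i) \<le> vnorm d x + vnorm d y"
  using vnorm_triangle[of d x "\<lambda>i. - y i"] by (simp add: vnorm_minus)

lemma vnorm_eq_0_iff: "vnorm d x = 0 \<longleftrightarrow> (\<forall>i<d. x i = 0)"
proof -
  have "vnorm d x = 0 \<longleftrightarrow> (\<Sum>i<d. x i * x i) = 0" unfolding vnorm_def vinner_def by simp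
  also have "\<dots> \<longleftrightarrow> (\<forall>i<d. x i * x i = 0)" by (subst sum_nonneg_eq_0_iff) auto
  finally show ?thesis by simp
qed

lemma vnorm_add_power2:
  "(vnorm d (\<lambda>i. x i + y i))\<^sup>2 = (vnorm d x)\<^sup>2 + 2 * vinner d x y + (vnorm d y)\<^sup>2"
  unfolding vnorm_power2 by (simp add: vinner_add_left vinner_add_right vinner_commute[of d y x])

lemma vnorm_diff_power2:
  "(vnorm d (\<lambda>i. x i - y i))\<^sup>2 = (vnorm d x)\<^sup>2 - 2 * vinner d x y + (vnorm d y)\<^sup>2"
  unfolding vnorm_power2 by (simp add: vinner_diff_left vinner_diff_right vinner_commute[of d y x])

lemma vnorm_add_power2_le: "(vnorm d (\<lambda>i. x i + y i))\<^sup>2 \<le> 2 * (vnorm d x)\<^sup>2 + 2 * (vnorm d y)\<^sup>2"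
  using vnorm_add_power2[of d x y] vnorm_diff_power2[of d x y] zero_le_power2[of "vnorm d (\<lambda>i. x i - y i)"]
  by linarith

lemma vnorm_parallelogram:
  "(vnorm d (\<lambda>i. (x i + y i) / 2))\<^sup>2 + (vnorm d (\<lambda>i. x i - y i))\<^sup>2 / 4 = ((vnorm d x)\<^sup>2 + (vnorm d y)\<^sup>2) / 2"
proof -
  have "vnorm d (\<lambda>i. (x i + y i) / 2) = vnorm d (\<lambda>i. (1/2) * (x i + y i))" by (rule vnorm_cong) simp
  also have "\<dots> = vnorm d (\<lambda>i. x i + y i) / 2" unfolding vnorm_scale by simp
  finally have "(vnorm d (\<lambda>i. (x i + y i) / 2))\<^sup>2 = (vnorm d (\<lambda>i. x i + y i))\<^sup>2 / 4"
    by (simp only: power_divide) simp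
  then show ?thesis by (simp add: vnorm_add_power2 vnorm_diff_power2 field_simps)
qed

lemma vnorm_le_if_vinner_le:
  assumes "\<And>b. vinner d b x \<le> vnorm d b * B" and "0 \<le> B"
  shows "vnorm d x \<le> B"
proof (cases "vnorm d x = 0")
  case False
  then have "vnorm d x > 0" using vnorm_nonneg[of d x] by linarith
  moreover have "vnorm d x * vnorm d x \<le> vnorm d x * B"
    using assms(1)[of x] by (simp add: vnorm_power2[symmetric] power2_eq_square)
  ultimately show ?thesis by simp
qed (use assms(2) in simp)

lemma integrable_measure_pmf_bounded:
  fixes f :: "'a \<Rightarrow> real"
  assumes "\<And>x. x \<in> set_pmf M \<Longrightarrow> \<bar>f x\<bar> \<le> B"
  shows "integrable (measure_pmf M) f"
  by (rule measure_pmf.integrable_const_bound[where B=B]) (auto intro!: AE_pmfI assms)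

lemma integral_mono_measure_pmf:
  fixes f g :: "'a \<Rightarrow> real"
  assumes "integrable (measure_pmf M) f" "integrable (measure_pmf M) g"
    and "\<And>x. x \<in> set_pmf M \<Longrightarrow> f x \<le> g x"
  shows "measure_pmf.expectation M f \<le> measure_pmf.expectation M g"
  by (rule integral_mono_AE) (auto intro!: AE_pmfI assms)

lemma integral_cong_measure_pmf:
  fixes f g :: "'a \<Rightarrow> real"
  assumes "\<And>x. x \<in> set_pmf M \<Longrightarrow> f x = g x"
  shows "measure_pmf.expectation M f = measure_pmf.expectation M g"
  by (rule integral_cong_AE) (auto intro!: AE_pmfI assms)

lemma integral_le_measure_pmf:
  fixes f :: "'a \<Rightarrow> real"
  assumes "\<And>x. x \<in> set_pmf M \<Longrightarrow> \<bar>f x\<bar> \<le> B" and "\<And>x. x \<in> set_pmf M \<Longrightarrow> f x \<le> c"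
  shows "measure_pmf.expectation M f \<le> c"
  using assms by (intro measure_pmf.integral_le_const integrable_measure_pmf_bounded AE_pmfI)

lemma abs_integral_le_measure_pmf:
  fixes f :: "'a \<Rightarrow> real"
  assumes "\<And>x. x \<in> set_pmf M \<Longrightarrow> \<bar>f x\<bar> \<le> B"
  shows "\<bar>measure_pmf.expectation M f\<bar> \<le> B"
proof -
  have "\<bar>measure_pmf.expectation M f\<bar> \<le> measure_pmf.expectation M (\<lambda>x. \<bar>f x\<bar>)"
    by (rule integral_abs_bound)
  also have "\<dots> \<le> B" using assms by (intro integral_le_measure_pmf[where B=B]) auto
  finally show ?thesis .
qed

lemma integral_bind_pmf_bounded:
  fixes f :: "'b \<Rightarrow> real"
  assumes bnd: "\<And>x. x \<in> set_pmf (bind_pmf M N) \<Longrightarrow> \<bar>f x\<bar> \<le> B"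
  shows "measure_pmf.expectation (bind_pmf M N) f =
         measure_pmf.expectation M (\<lambda>x. measure_pmf.expectation (N x) f)"
proof -
  obtain y where "y \<in> set_pmf (bind_pmf M N)" using set_pmf_not_empty[of "bind_pmf M N"] by blast
  then have B0: "0 \<le> B" using bnd[of y] by linarith
  \<comment> \<open>clipping makes \<open>f\<close> globally bounded, as \<open>integral_bind\<close> requires\<close>
  define f' where "f' = (\<lambda>x. max (-B) (min B (f x)))"
  have "measure_pmf.expectation (bind_pmf M N) f = measure_pmf.expectation (bind_pmf M N) f'"
    by (rule integral_cong_measure_pmf) (use bnd in \<open>fastforce simp: f'_def abs_le_iff\<close>)
  also have "\<dots> = measure_pmf.expectation M (\<lambda>x. measure_pmf.expectation (N x) f')"
    unfolding measure_pmf_bind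
    by (rule integral_bind[where K="count_space UNIV" and B=B and B'=1])
       (use B0 in \<open>auto simp: f'_def measure_pmf.finite_measure measure_pmf_in_subprob_algebra
             intro!: AE_pmfI measure_pmf.emeasure_le_1\<close>)
  also have "\<dots> = measure_pmf.expectation M (\<lambda>x. measure_pmf.expectation (N x) f)"
    by (rule integral_cong_measure_pmf, rule integral_cong_measure_pmf)
       (use bnd in \<open>fastforce simp: f'_def abs_le_iff\<close>)
  finally show ?thesis .
qed

lemma integral_measure_pmf_finite:
  fixes f :: "'a \<Rightarrow> real"
  assumes "finite A" "set_pmf M \<subseteq> A"
  shows "measure_pmf.expectation M f = (\<Sum>a\<in>A. pmf M a * f a)"
  using assms by (subst integral_measure_pmf_real[of A]) (auto simp: mult.commute)

lemma integral_sqrt_le_sqrt_integral: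
  fixes f :: "'a \<Rightarrow> real"
  assumes f0: "\<And>x. x \<in> set_pmf M \<Longrightarrow> 0 \<le> f x" and fB: "\<And>x. x \<in> set_pmf M \<Longrightarrow> f x \<le> B"
  shows "measure_pmf.expectation M (\<lambda>x. sqrt (f x)) \<le> sqrt (measure_pmf.expectation M f)"
proof -
  define m where "m = measure_pmf.expectation M (\<lambda>x. sqrt (f x))"
  have "integrable (measure_pmf M) f"
    using f0 fB by (intro integrable_measure_pmf_bounded[where B=B]) fastforce
  moreover have "integrable (measure_pmf M) (\<lambda>x. sqrt (f x))"
    using f0 fB by (intro integrable_measure_pmf_bounded[where B="sqrt B"]) simp
  ultimately have "measure_pmf.expectation M (\<lambda>x. f x - 2 * m * sqrt (f x) + m\<^sup>2) =
             measure_pmf.expectation M f - 2 * m * m + m\<^sup>2"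
    unfolding m_def by simp
  moreover have "measure_pmf.expectation M (\<lambda>x. (sqrt (f x) - m)\<^sup>2) =
                 measure_pmf.expectation M (\<lambda>x. f x - 2 * m * sqrt (f x) + m\<^sup>2)"
    by (rule integral_cong_measure_pmf) (use f0 in \<open>simp add: power2_diff\<close>)
  moreover have "0 \<le> measure_pmf.expectation M (\<lambda>x. (sqrt (f x) - m)\<^sup>2)" by simp
  ultimately have "m\<^sup>2 \<le> measure_pmf.expectation M f" by (simp add: power2_eq_square)
  then show ?thesis unfolding m_def by (rule real_le_rsqrt)
qed

definition zfirst :: "(nat \<Rightarrow> nat pmf) \<Rightarrow> (nat \<Rightarrow> nat \<Rightarrow> real) \<Rightarrow> nat \<Rightarrow> sample pmf" where
  "zfirst P Rw s = map_pmf (\<lambda>s'. (s, Rw s s', s')) (P s)"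

definition zset :: "nat set \<Rightarrow> (nat \<Rightarrow> nat \<Rightarrow> real) \<Rightarrow> sample set" where
  "zset S Rw = (\<lambda>(s, s'). (s, Rw s s', s')) ` (S \<times> S)"

lemma finite_zset: "finite S \<Longrightarrow> finite (zset S Rw)"
  unfolding zset_def by simp

lemma stepn_add: "stepn P (m + n) s = bind_pmf (stepn P m s) (stepn P n)"
  by (induction n) (simp_all add: bind_return_pmf' bind_assoc_pmf)

lemma set_stepn_subset:
  assumes "\<forall>s\<in>S. set_pmf (P s) \<subseteq> S" "s \<in> S"
  shows "set_pmf (stepn P n s) \<subseteq> S"
  using assms by (induction n) auto

lemma zstep_eq_zfirst: "zstep P Rw = (\<lambda>z. zfirst P Rw (snd (snd z)))"
  unfolding zstep_def zfirst_def by (auto split: prod.split)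

lemma zstepn_0_eq_return [simp]: "zstepn P Rw 0 = return_pmf"
  by (rule ext) simp

lemma zstepn_add: "zstepn P Rw (m + n) z = bind_pmf (zstepn P Rw m z) (zstepn P Rw n)"
  by (induction n) (simp_all add: bind_return_pmf' bind_assoc_pmf)

lemma zstepn_Suc': "zstepn P Rw (Suc n) z = bind_pmf (zstep P Rw z) (zstepn P Rw n)"
  using zstepn_add[of P Rw 1 n z] by (simp add: bind_return_pmf)

lemma map_zstepn_state: "map_pmf (\<lambda>z. snd (snd z)) (zstepn P Rw n z) = stepn P n (snd (snd z))"
proof (induction n)
  case (Suc n)
  have "map_pmf (\<lambda>z. snd (snd z)) (zstepn P Rw (Suc n) z) =
        bind_pmf (map_pmf (\<lambda>z. snd (snd z)) (zstepn P Rw n z)) P"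
    by (simp add: map_bind_pmf bind_map_pmf zstep_eq_zfirst zfirst_def map_pmf_comp)
  then show ?case using Suc by simp
qed simp

lemma zstepn_Suc_eq_stepn: "zstepn P Rw (Suc n) z = bind_pmf (stepn P n (snd (snd z))) (zfirst P Rw)"
proof -
  have "zstepn P Rw (Suc n) z = bind_pmf (map_pmf (\<lambda>z. snd (snd z)) (zstepn P Rw n z)) (zfirst P Rw)"
    by (simp add: bind_map_pmf zstep_eq_zfirst)
  then show ?thesis by (simp add: map_zstepn_state)
qed

lemma zstat_eq_bind_zfirst: "zstat P Rw \<mu> = bind_pmf \<mu> (zfirst P Rw)"
  unfolding zstat_def zfirst_def by simp

lemma bind_zstat_zstepn:
  assumes "bind_pmf \<mu> P = \<mu>"
  shows "bind_pmf (zstat P Rw \<mu>) (zstepn P Rw n) = zstat P Rw \<mu>"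
proof (induction n)
  case (Suc n)
  have step: "bind_pmf (zfirst P Rw s) (zstep P Rw) = bind_pmf (P s) (zfirst P Rw)" for s
    by (simp only: zfirst_def[of P Rw s] bind_map_pmf zstep_eq_zfirst snd_conv)
  have "zstepn P Rw (Suc n) = (\<lambda>z. bind_pmf (zstepn P Rw n z) (zstep P Rw))" by (rule ext) simp
  then have "bind_pmf (zstat P Rw \<mu>) (zstepn P Rw (Suc n)) =
        bind_pmf (bind_pmf (zstat P Rw \<mu>) (zstepn P Rw n)) (zstep P Rw)"
    by (simp add: bind_assoc_pmf)
  also have "\<dots> = bind_pmf (bind_pmf \<mu> P) (zfirst P Rw)"
    using Suc by (simp add: zstat_eq_bind_zfirst bind_assoc_pmf step)
  also have "\<dots> = zstat P Rw \<mu>" using assms by (simp add: zstat_eq_bind_zfirst)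
  finally show ?case .
qed (simp add: bind_return_pmf')

lemma set_zfirst_subset:
  assumes "\<forall>s\<in>S. set_pmf (P s) \<subseteq> S" "s \<in> S"
  shows "set_pmf (zfirst P Rw s) \<subseteq> zset S Rw"
  using assms unfolding zfirst_def zset_def by fastforce

lemma set_zstepn_subset:
  assumes "\<forall>s\<in>S. set_pmf (P s) \<subseteq> S" "snd (snd z) \<in> S"
  shows "set_pmf (zstepn P Rw n z) \<subseteq> insert z (zset S Rw)"
proof (cases n)
  case (Suc m)
  show ?thesis
    unfolding Suc zstepn_Suc_eq_stepn
    using set_stepn_subset[OF assms, of m] set_zfirst_subset[OF assms(1)] by fastforce
qed simp

lemma set_zstepn_zset:
  assumes "\<forall>s\<in>S. set_pmf (P s) \<subseteq> S" "z \<in> zset S Rw"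
  shows "set_pmf (zstepn P Rw n z) \<subseteq> zset S Rw"
proof -
  have "snd (snd z) \<in> S" using assms(2) unfolding zset_def by auto
  then show ?thesis using set_zstepn_subset[OF assms(1), of z Rw n] assms(2) by blast
qed

lemma set_zstat_subset:
  assumes "\<forall>s\<in>S. set_pmf (P s) \<subseteq> S" "set_pmf \<mu> \<subseteq> S"
  shows "set_pmf (zstat P Rw \<mu>) \<subseteq> zset S Rw"
  using assms set_zfirst_subset[OF assms(1)] by (fastforce simp: zstat_eq_bind_zfirst)

lemma set_samples:
  assumes "\<forall>s\<in>S. set_pmf (P s) \<subseteq> S" "s \<in> S" "p \<in> set_pmf (samples P Rw n s)"
  shows "length (fst p) = n \<and> set (fst p) \<subseteq> zset S Rw \<and> snd p \<in> S"
  using assms(2,3)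
proof (induction n arbitrary: s p)
  case (Suc n)
  then obtain s' q where s': "s' \<in> set_pmf (P s)" and q: "q \<in> set_pmf (samples P Rw n s')"
    and p: "p = ((s, Rw s s', s') # fst q, snd q)"
    by (auto split: prod.splits)
  have "s' \<in> S" using s' assms(1) Suc.prems(1) by auto
  then show ?case using Suc.IH[OF _ q] p Suc.prems(1) by (auto simp: zset_def)
qed simp

lemma map_take_samples:
  assumes "m \<le> n"
  shows "map_pmf (\<lambda>p. take m (fst p)) (samples P Rw n s) = map_pmf fst (samples P Rw m s)"
  using assms
proof (induction m arbitrary: n s)
  case 0
  then show ?case by (simp add: map_pmf_def bind_return_pmf bind_return_pmf' bind_pmf_const)
next
  case (Suc m)
  then obtain n' where n: "n = Suc n'" "m \<le> n'" by (cases n) auto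
  have "map_pmf (\<lambda>p. take (Suc m) (fst p)) (samples P Rw n s) = bind_pmf (P s)
          (\<lambda>s'. map_pmf (Cons (s, Rw s s', s')) (map_pmf (\<lambda>p. take m (fst p)) (samples P Rw n' s')))"
    by (simp add: n map_bind_pmf map_pmf_comp split_beta)
  also have "\<dots> = map_pmf fst (samples P Rw (Suc m) s)"
    using Suc.IH n by (simp add: map_bind_pmf map_pmf_comp split_beta)
  finally show ?case .
qed

lemma map_nth_samples:
  assumes "k < n"
  shows "map_pmf (\<lambda>p. fst p ! k) (samples P Rw n s) = bind_pmf (zfirst P Rw s) (zstepn P Rw k)"
  using assms
proof (induction k arbitrary: n s)
  case 0
  then obtain n' where n: "n = Suc n'" by (cases n) auto
  have "map_pmf (\<lambda>p. fst p ! 0) (samples P Rw n s) =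
        bind_pmf (P s) (\<lambda>s'. map_pmf (\<lambda>_. (s, Rw s s', s')) (samples P Rw n' s'))"
    by (simp add: n map_bind_pmf map_pmf_comp split_beta)
  then show ?case by (simp add: map_pmf_const zfirst_def map_pmf_def bind_return_pmf')
next
  case (Suc k)
  then obtain n' where n: "n = Suc n'" "k < n'" by (cases n) auto
  have "map_pmf (\<lambda>p. fst p ! Suc k) (samples P Rw n s) =
        bind_pmf (P s) (\<lambda>s'. map_pmf (\<lambda>p. fst p ! k) (samples P Rw n' s'))"
    by (simp add: n map_bind_pmf map_pmf_comp split_beta)
  also have "\<dots> = bind_pmf (zfirst P Rw s) (zstepn P Rw (Suc k))"
    using Suc.IH n by (simp only: zstepn_Suc' zfirst_def[of P Rw s] bind_map_pmf zstep_eq_zfirst snd_conv)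
  finally show ?case .
qed

lemma map_nth_pair_samples:
  assumes "i < j" "j < n"
  shows "map_pmf (\<lambda>p. (fst p ! i, fst p ! j)) (samples P Rw n s) =
         bind_pmf (map_pmf (\<lambda>p. fst p ! i) (samples P Rw n s)) (\<lambda>z. map_pmf (Pair z) (zstepn P Rw (j - i) z))"
  using assms
proof (induction i arbitrary: j n s)
  case 0
  then obtain n' j' where n: "n = Suc n'" "j = Suc j'" "j' < n'" by (cases n; cases j) auto
  have "map_pmf (\<lambda>p. (fst p ! 0, fst p ! j)) (samples P Rw n s) = bind_pmf (P s)
          (\<lambda>s'. map_pmf (Pair (s, Rw s s', s')) (map_pmf (\<lambda>p. fst p ! j') (samples P Rw n' s')))"
    by (simp add: n map_bind_pmf map_pmf_comp split_beta)
  also have "\<dots> = bind_pmf (P s) (\<lambda>s'. map_pmf (Pair (s, Rw s s', s')) (zstepn P Rw j (s, Rw s s', s')))"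
    using map_nth_samples[OF n(3)] by (simp only: n zstepn_Suc' zstep_eq_zfirst snd_conv)
  also have "\<dots> = bind_pmf (zfirst P Rw s) (\<lambda>z. map_pmf (Pair z) (zstepn P Rw j z))"
    by (simp add: zfirst_def bind_map_pmf)
  also have "\<dots> = bind_pmf (map_pmf (\<lambda>p. fst p ! 0) (samples P Rw n s)) (\<lambda>z. map_pmf (Pair z) (zstepn P Rw (j - 0) z))"
    using map_nth_samples[of 0 n P Rw s] n(1) by (simp add: bind_return_pmf')
  finally show ?case .
next
  case (Suc i)
  then obtain n' j' where n: "n = Suc n'" "j = Suc j'" "i < j'" "j' < n'" by (cases n; cases j) auto
  have "map_pmf (\<lambda>p. (fst p ! Suc i, fst p ! j)) (samples P Rw n s) =
        bind_pmf (P s) (\<lambda>s'. map_pmf (\<lambda>p. (fst p ! i, fst p ! j')) (samples P Rw n' s'))"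
    by (simp add: n map_bind_pmf map_pmf_comp split_beta)
  then show ?case
    using Suc.IH n by (simp add: n map_bind_pmf map_pmf_comp split_beta bind_assoc_pmf)
qed

section \<open>Total variation distance and Dobrushin's contraction\<close>

lemma abs_prob_diff_le_1: "\<bar>measure_pmf.prob p A - measure_pmf.prob q A\<bar> \<le> 1"
  using measure_pmf.prob_le_1[of p A] measure_pmf.prob_le_1[of q A] measure_nonneg[of p A] measure_nonneg[of q A]
  by linarith

lemma bdd_above_prob_diff: "bdd_above (range (\<lambda>A. \<bar>measure_pmf.prob p A - measure_pmf.prob q A\<bar>))"
  using abs_prob_diff_le_1 by (intro bdd_aboveI[where M=1]) blast

lemma tv_dist_ge: "\<bar>measure_pmf.prob p A - measure_pmf.prob q A\<bar> \<le> tv_dist p q"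
  unfolding tv_dist_def by (rule cSUP_upper[OF _ bdd_above_prob_diff]) simp

lemma tv_dist_leI: "(\<And>A. \<bar>measure_pmf.prob p A - measure_pmf.prob q A\<bar> \<le> c) \<Longrightarrow> tv_dist p q \<le> c"
  unfolding tv_dist_def by (rule cSUP_least) auto

lemma tv_dist_le_1: "tv_dist p q \<le> 1"
  by (rule tv_dist_leI) (rule abs_prob_diff_le_1)

lemma tv_dist_nonneg: "0 \<le> tv_dist p q"
  using tv_dist_ge[of p "{}" q] by simp

lemma tv_dist_commute: "tv_dist p q = tv_dist q p"
  unfolding tv_dist_def by (simp add: abs_minus_commute)

lemma tv_dist_triangle: "tv_dist p r \<le> tv_dist p q + tv_dist q r"
proof (rule tv_dist_leI)
  fix A
  show "\<bar>measure_pmf.prob p A - measure_pmf.prob r A\<bar> \<le> tv_dist p q + tv_dist q r"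
    using tv_dist_ge[of p A q] tv_dist_ge[of q A r] by linarith
qed

lemma tv_dist_le_1_minus_common_mass:
  assumes "\<epsilon> \<le> pmf p x" "\<epsilon> \<le> pmf q x"
  shows "tv_dist p q \<le> 1 - \<epsilon>"
proof -
  have one_sided: "measure_pmf.prob p A - measure_pmf.prob q A \<le> 1 - \<epsilon>"
    if "\<epsilon> \<le> pmf p x" "\<epsilon> \<le> pmf q x" for p q :: "'a pmf" and A
  proof (cases "x \<in> A")
    case True
    have "pmf q x \<le> measure_pmf.prob q A"
      using True measure_pmf.finite_measure_mono[of "{x}" A q] by (simp add: measure_pmf_single)
    then show ?thesis using that measure_pmf.prob_le_1[of p A] by linarith
  next
    case False
    have "measure_pmf.prob p (A \<union> {x}) = measure_pmf.prob p A + pmf p x"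
      using False by (subst measure_pmf.finite_measure_Union) (auto simp: measure_pmf_single)
    then show ?thesis using that measure_pmf.prob_le_1[of p "A \<union> {x}"] measure_nonneg[of q A] by linarith
  qed
  show ?thesis
    by (rule tv_dist_leI) (use one_sided[OF assms] one_sided[OF assms(2,1)] in \<open>simp add: abs_le_iff\<close>)
qed

lemma sum_pmf_diff_eq_0:
  assumes "finite W" "set_pmf p \<subseteq> W" "set_pmf q \<subseteq> W"
  shows "(\<Sum>x\<in>W. pmf p x - pmf q x) = 0"
  using sum_pmf_eq_1[OF assms(1,2)] sum_pmf_eq_1[OF assms(1,3)] by (simp add: sum_subtractf)

lemma sum_pos_part_pmf_diff_le_tv_dist:
  assumes "finite W" "set_pmf p \<subseteq> W" "set_pmf q \<subseteq> W"
  shows "(\<Sum>x\<in>W. max (pmf p x - pmf q x) 0) \<le> tv_dist p q"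
proof -
  define A where "A = {x\<in>W. pmf p x > pmf q x}"
  have "(\<Sum>x\<in>W. max (pmf p x - pmf q x) 0) = (\<Sum>x\<in>A. pmf p x - pmf q x)"
    unfolding A_def by (rule sum.mono_neutral_cong_right) (use assms(1) in auto)
  also have "\<dots> = measure_pmf.prob p A - measure_pmf.prob q A"
    using assms(1) by (simp add: A_def measure_measure_pmf_finite sum_subtractf)
  also have "\<dots> \<le> tv_dist p q" using tv_dist_ge[of p A q] by linarith
  finally show ?thesis .
qed

lemma sum_pmf_diff_mult_le_tv_dist:
  assumes "finite W" "set_pmf p \<subseteq> W" "set_pmf q \<subseteq> W" "\<And>x. x \<in> W \<Longrightarrow> \<bar>h x\<bar> \<le> H"
  shows "(\<Sum>x\<in>W. (pmf p x - pmf q x) * h x) \<le> 2 * H * tv_dist p q"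
proof -
  obtain x where "x \<in> set_pmf p" using set_pmf_not_empty[of p] by blast
  then have H0: "0 \<le> H" using assms(2) assms(4)[of x] by force
  \<comment> \<open>shifting \<open>h\<close> by \<open>H\<close> changes nothing, since the weights sum to zero\<close>
  have "(\<Sum>x\<in>W. (pmf p x - pmf q x) * h x) = (\<Sum>x\<in>W. (pmf p x - pmf q x) * (h x + H))"
    using sum_pmf_diff_eq_0[OF assms(1-3)]
    by (simp add: distrib_left sum.distrib sum_distrib_right[symmetric])
  also have "\<dots> \<le> (\<Sum>x\<in>W. max (pmf p x - pmf q x) 0 * (2 * H))"
  proof (rule sum_mono)
    fix x assume "x \<in> W"
    then have "0 \<le> h x + H" "h x + H \<le> 2 * H" using assms(4)[of x] by linarith+
    then show "(pmf p x - pmf q x) * (h x + H) \<le> max (pmf p x - pmf q x) 0 * (2 * H)"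
      by (meson max.cobounded1 max.cobounded2 mult_left_mono mult_right_mono order_trans)
  qed
  also have "\<dots> = 2 * H * (\<Sum>x\<in>W. max (pmf p x - pmf q x) 0)"
    by (simp add: sum_distrib_left mult.commute)
  also have "\<dots> \<le> 2 * H * tv_dist p q"
    using H0 sum_pos_part_pmf_diff_le_tv_dist[OF assms(1-3)] by (intro mult_left_mono) auto
  finally show ?thesis .
qed

lemma sum_mult_le_oscillation:
  fixes w k :: "'a \<Rightarrow> real"
  assumes "finite W" "(\<Sum>x\<in>W. w x) = 0" "0 \<le> \<delta>" "\<And>x y. x \<in> W \<Longrightarrow> y \<in> W \<Longrightarrow> k x - k y \<le> \<delta>"
  shows "(\<Sum>x\<in>W. w x * k x) \<le> \<delta> * (\<Sum>x\<in>W. max (w x) 0)"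
proof (cases "W = {}")
  case False
  define M where "M = Max (k ` W)"
  define m where "m = Min (k ` W)"
  define t where "t = (\<Sum>x\<in>W. max (w x) 0)"
  have "M \<in> k ` W" "m \<in> k ` W" unfolding M_def m_def using assms(1) False by auto
  then have "M - m \<le> \<delta>" using assms(4) by blast
  have kM: "k x \<le> M" and km: "m \<le> k x" if "x \<in> W" for x
    unfolding M_def m_def using assms(1) that by auto
  have neg_part: "max (- w x) 0 = max (w x) 0 - w x" for x by auto
  have t: "(\<Sum>x\<in>W. max (- w x) 0) = t"
    using assms(2) unfolding t_def neg_part by (simp add: sum_subtractf)
  have "(\<Sum>x\<in>W. w x * k x) = (\<Sum>x\<in>W. max (w x) 0 * k x - max (- w x) 0 * k x)"
    unfolding neg_part by (simp add: algebra_simps)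
  also have "\<dots> = (\<Sum>x\<in>W. max (w x) 0 * k x) - (\<Sum>x\<in>W. max (- w x) 0 * k x)"
    by (rule sum_subtractf)
  also have "\<dots> \<le> (\<Sum>x\<in>W. max (w x) 0 * M) - (\<Sum>x\<in>W. max (- w x) 0 * m)"
    using kM km by (intro diff_mono sum_mono mult_left_mono) auto
  also have "\<dots> = (M - m) * t"
    by (simp only: sum_distrib_right[symmetric] t t_def[symmetric]) (simp add: algebra_simps)
  also have "\<dots> \<le> \<delta> * t"
    using \<open>M - m \<le> \<delta>\<close> by (intro mult_right_mono) (simp_all add: t_def sum_nonneg)
  finally show ?thesis unfolding t_def .
qed simp

lemma measure_bind_pmf_finite:
  assumes "finite W" "set_pmf p \<subseteq> W"
  shows "measure_pmf.prob (bind_pmf p K) A = (\<Sum>x\<in>W. pmf p x * measure_pmf.prob (K x) A)"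
proof -
  have "measure_pmf.prob (bind_pmf p K) A = measure_pmf.expectation (bind_pmf p K) (indicator A)"
    by simp
  also have "\<dots> = measure_pmf.expectation p (\<lambda>x. measure_pmf.expectation (K x) (indicator A))"
    by (rule integral_bind_pmf_bounded[where B=1]) (auto simp: indicator_def)
  also have "\<dots> = (\<Sum>x\<in>W. pmf p x * measure_pmf.prob (K x) A)"
    by (simp add: integral_measure_pmf_finite[OF assms])
  finally show ?thesis .
qed

lemma tv_dist_bind_pmf_le:
  assumes "finite W" "set_pmf p \<subseteq> W" "set_pmf q \<subseteq> W" "0 \<le> \<delta>"
    and "\<And>x y. x \<in> W \<Longrightarrow> y \<in> W \<Longrightarrow> tv_dist (K x) (K y) \<le> \<delta>"
  shows "tv_dist (bind_pmf p K) (bind_pmf q K) \<le> \<delta> * tv_dist p q"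
proof (rule tv_dist_leI)
  fix A
  define k where "k x = measure_pmf.prob (K x) A" for x
  have kd: "k x - k y \<le> \<delta>" if "x \<in> W" "y \<in> W" for x y
    using tv_dist_ge[of "K x" A "K y"] assms(5)[OF that] unfolding k_def by linarith
  have one_sided: "(\<Sum>x\<in>W. (pmf p' x - pmf q' x) * k x) \<le> \<delta> * tv_dist p' q'"
    if "set_pmf p' \<subseteq> W" "set_pmf q' \<subseteq> W" for p' q'
  proof -
    have "(\<Sum>x\<in>W. (pmf p' x - pmf q' x) * k x) \<le> \<delta> * (\<Sum>x\<in>W. max (pmf p' x - pmf q' x) 0)"
      by (rule sum_mult_le_oscillation[OF assms(1) sum_pmf_diff_eq_0[OF assms(1) that] assms(4) kd])
    also have "\<dots> \<le> \<delta> * tv_dist p' q'"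
      by (rule mult_left_mono[OF sum_pos_part_pmf_diff_le_tv_dist[OF assms(1) that] assms(4)])
    finally show ?thesis .
  qed
  have "measure_pmf.prob (bind_pmf p K) A - measure_pmf.prob (bind_pmf q K) A =
        (\<Sum>x\<in>W. (pmf p x - pmf q x) * k x)"
    by (simp add: measure_bind_pmf_finite[OF assms(1,2)] measure_bind_pmf_finite[OF assms(1,3)]
        k_def sum_subtractf left_diff_distrib)
  moreover have "(\<Sum>x\<in>W. (pmf q x - pmf p x) * k x) = - (\<Sum>x\<in>W. (pmf p x - pmf q x) * k x)"
    by (simp add: sum_negf[symmetric] algebra_simps)
  ultimately show "\<bar>measure_pmf.prob (bind_pmf p K) A - measure_pmf.prob (bind_pmf q K) A\<bar> \<le> \<delta> * tv_dist p q"
    using one_sided[OF assms(2,3)] one_sided[OF assms(3,2)] by (simp add: tv_dist_commute abs_le_iff)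
qed

section \<open>Primitivity of irreducible aperiodic chains\<close>

lemma add_closed_lincomb:
  fixes A :: "nat set"
  assumes "\<And>a b. a \<in> A \<Longrightarrow> b \<in> A \<Longrightarrow> a + b \<in> A" "a \<in> A" "b \<in> A" "1 \<le> i + j"
  shows "i * a + j * b \<in> A"
proof -
  have mult: "k * c \<in> A" if "c \<in> A" "1 \<le> k" for c k
    using that(2)
  proof (induction k)
    case (Suc k)
    then show ?case using that(1) assms(1)[of c "k * c"] by (cases "k = 0") auto
  qed simp
  consider "i = 0" | "j = 0" | "1 \<le> i" "1 \<le> j" by linarith
  then show ?thesis
    by cases (use assms(1,4) mult[OF assms(2)] mult[OF assms(3)] in auto)
qed

lemma numerical_semigroup_consecutive:
  fixes A :: "nat set"
  assumes add: "\<And>a b. a \<in> A \<Longrightarrow> b \<in> A \<Longrightarrow> a + b \<in> A" and "0 \<notin> A" and "Gcd A = 1"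
  shows "\<exists>a. a \<in> A \<and> a + 1 \<in> A"
proof -
  \<comment> \<open>the least positive difference of two elements divides every element, hence is 1\<close>
  define Ds where "Ds = {b - a | a b. a \<in> A \<and> b \<in> A \<and> a < b}"
  obtain a0 where a0: "a0 \<in> A" using \<open>Gcd A = 1\<close> by fastforce
  have "0 < a0" using a0 \<open>0 \<notin> A\<close> by (cases a0) auto
  then have "a0 = 2 * a0 - a0" "a0 < 2 * a0" "2 * a0 \<in> A" using add[OF a0 a0] by (simp_all add: mult_2)
  then have "a0 \<in> Ds" unfolding Ds_def using a0 by blast
  define dd where "dd = (LEAST x. x \<in> Ds)"
  have "dd \<in> Ds" unfolding dd_def by (rule LeastI[of _ a0]) fact
  then obtain a b where ab: "a \<in> A" "b \<in> A" "a < b" "dd = b - a" unfolding Ds_def by blast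
  have "dd dvd x" if x: "x \<in> A" for x
  proof (rule ccontr)
    assume "\<not> dd dvd x"
    define q where "q = x div dd"
    have "0 < x mod dd" using \<open>\<not> dd dvd x\<close> by (simp add: dvd_eq_mod_eq_0)
    have "x + (q + 1) * a \<in> A" using add[OF x] add_closed_lincomb[OF add ab(1,2), of "q + 1" 0] by simp
    moreover have "1 * a + q * b \<in> A" using add_closed_lincomb[OF add ab(1,2), of 1 q] by simp
    moreover have "1 * a + q * b = (q + 1) * a + q * dd" using ab(3,4) by (simp add: algebra_simps)
    note this
    moreover have "x + (q + 1) * a = (1 * a + q * b) + x mod dd"
      using \<open>1 * a + q * b = (q + 1) * a + q * dd\<close> unfolding q_def
      by (metis add.assoc add.commute div_mult_mod_eq)
    ultimately have "x mod dd \<in> Ds" unfolding Ds_def using \<open>0 < x mod dd\<close>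
      by (intro CollectI exI[of _ "1 * a + q * b"] exI[of _ "x + (q + 1) * a"]) simp
    then have "dd \<le> x mod dd" unfolding dd_def by (rule Least_le)
    moreover have "x mod dd < dd" using ab by simp
    ultimately show False by simp
  qed
  then have "dd dvd Gcd A" by (intro Gcd_greatest) blast
  then have "b = a + 1" using \<open>Gcd A = 1\<close> ab by simp
  then show ?thesis using ab by blast
qed

lemma numerical_semigroup_cofinite:
  fixes A :: "nat set"
  assumes add: "\<And>a b. a \<in> A \<Longrightarrow> b \<in> A \<Longrightarrow> a + b \<in> A" and "0 \<notin> A" and "Gcd A = 1"
  shows "\<exists>N. \<forall>n\<ge>N. n \<in> A"
proof -
  obtain a where a: "a \<in> A" "a + 1 \<in> A" using numerical_semigroup_consecutive[OF assms] by blast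
  have "n \<in> A" if n: "a * a \<le> n" for n
  proof -
    \<comment> \<open>write \<open>n = q a + r = (q - r) a + r (a + 1)\<close> with \<open>r < a \<le> q\<close>\<close>
    define q where "q = n div a"
    define r where "r = n mod a"
    have "1 \<le> a" using a(1) \<open>0 \<notin> A\<close> by (cases a) auto
    then have "r < a" unfolding r_def by simp
    have "a \<le> q" unfolding q_def using n \<open>1 \<le> a\<close>
      by (metis div_le_mono nonzero_mult_div_cancel_right not_one_le_zero)
    then have "r * a \<le> q * a" using \<open>r < a\<close> by simp
    then have "(q - r) * a + r * (a + 1) = q * a + r" by (simp add: diff_mult_distrib algebra_simps)
    also have "q * a + r = n" unfolding q_def r_def by simp
    finally show ?thesis using add_closed_lincomb[OF add a, of "q - r" r] \<open>r < a\<close> \<open>a \<le> q\<close> by simp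
  qed
  then show ?thesis by blast
qed

lemma stepn_primitive:
  assumes "finite S" and irr: "irreducible_on S P" and ap: "aperiodic_on S P"
  shows "\<exists>N. \<forall>x\<in>S. \<forall>y\<in>S. y \<in> set_pmf (stepn P N x)"
proof -
  have "\<exists>N. \<forall>n\<ge>N. n \<in> {n. 0 < n \<and> y \<in> set_pmf (stepn P n y)}" if "y \<in> S" for y
  proof (rule numerical_semigroup_cofinite)
    fix a b assume "a \<in> {n. 0 < n \<and> y \<in> set_pmf (stepn P n y)}" "b \<in> {n. 0 < n \<and> y \<in> set_pmf (stepn P n y)}"
    then show "a + b \<in> {n. 0 < n \<and> y \<in> set_pmf (stepn P n y)}" by (auto simp: stepn_add)
  qed (use ap that in \<open>simp_all add: aperiodic_on_def\<close>)
  then have "\<forall>y\<in>S. \<exists>N. \<forall>n\<ge>N. y \<in> set_pmf (stepn P n y)" by blast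
  then obtain Ny where Ny: "\<forall>y\<in>S. \<forall>n\<ge>Ny y. y \<in> set_pmf (stepn P n y)" by (metis bchoice)
  define m where "m x y = (SOME n. y \<in> set_pmf (stepn P n x))" for x y
  have m: "y \<in> set_pmf (stepn P (m x y) x)" if "x \<in> S" "y \<in> S" for x y
  proof -
    have "\<exists>n. y \<in> set_pmf (stepn P n x)" using irr that unfolding irreducible_on_def by blast
    then show ?thesis unfolding m_def by (rule someI_ex)
  qed
  \<comment> \<open>reach \<open>y\<close> from \<open>x\<close>, then loop at \<open>y\<close> for the remaining time\<close>
  define N where "N = Max ((\<lambda>(x, y). m x y) ` (S \<times> S)) + Max (Ny ` S)"
  have "y \<in> set_pmf (stepn P N x)" if xy: "x \<in> S" "y \<in> S" for x y
  proof -
    define k where "k = N - m x y"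
    have "m x y \<le> Max ((\<lambda>(x, y). m x y) ` (S \<times> S))" "Ny y \<le> Max (Ny ` S)"
      using \<open>finite S\<close> xy by (auto intro!: Max_ge)
    then have "N = m x y + k" "Ny y \<le> k" unfolding N_def k_def by auto
    then have "y \<in> set_pmf (stepn P k y)" using Ny xy(2) by blast
    then show ?thesis unfolding \<open>N = m x y + k\<close> stepn_add using m[OF xy] by auto
  qed
  then show ?thesis by blast
qed

section \<open>Geometric mixing of the sample chain\<close>

locale td_problem =
  fixes S P Rw rmax \<gamma> \<mu> d \<phi> R \<theta>s
  assumes td: "td_setting S P Rw rmax \<gamma> \<mu> d \<phi> R \<theta>s"
begin

lemma finite_S: "finite S" and S_ne: "S \<noteq> {}" and P_closed: "\<forall>s\<in>S. set_pmf (P s) \<subseteq> S"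
  and Rw_bound: "\<And>s s'. s \<in> S \<Longrightarrow> s' \<in> S \<Longrightarrow> \<bar>Rw s s'\<bar> \<le> rmax"
  and gamma: "0 \<le> \<gamma>" "\<gamma> < 1" and ergodic: "ergodic_on S P"
  and set_mu: "set_pmf \<mu> \<subseteq> S" and mu_stationary: "bind_pmf \<mu> P = \<mu>"
  and phi_norm: "\<And>s. s \<in> S \<Longrightarrow> vnorm d (\<phi> s) \<le> 1"
  and theta_star_inRd: "inRd d \<theta>s" and gbar_theta_star: "gbar S P Rw \<mu> d \<phi> \<gamma> \<theta>s = (\<lambda>i. 0)"
  and R_pos: "0 < R" and theta_star_norm: "vnorm d \<theta>s \<le> R"
  using td unfolding td_setting_def stationary_on_def by auto

abbreviation "Z \<equiv> zset S Rw"
abbreviation "Z\<^sub>0 \<equiv> S \<times> (UNIV :: real set) \<times> S"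
abbreviation "dm \<equiv> dmix S P Rw \<mu>"
abbreviation "\<zeta> \<equiv> zstat P Rw \<mu>"
abbreviation "tau \<equiv> tau_mix S P Rw \<mu>"

lemma finite_Z: "finite Z"
  using finite_S by (rule finite_zset)

lemma Z_subset: "Z \<subseteq> Z\<^sub>0"
  unfolding zset_def by auto

lemma set_zstat: "set_pmf \<zeta> \<subseteq> Z"
  using set_zstat_subset[OF P_closed set_mu] .

lemma set_zstepn: "z \<in> Z \<Longrightarrow> set_pmf (zstepn P Rw n z) \<subseteq> Z"
  by (rule set_zstepn_zset[OF P_closed])

lemma dmix_ge: "z \<in> Z\<^sub>0 \<Longrightarrow> tv_dist (zstepn P Rw n z) \<zeta> \<le> dm n"
  unfolding dmix_def by (rule cSUP_upper) (auto intro: bdd_aboveI[where M=1] simp: tv_dist_le_1)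

lemma dmix_leI: "(\<And>z. z \<in> Z\<^sub>0 \<Longrightarrow> tv_dist (zstepn P Rw n z) \<zeta> \<le> c) \<Longrightarrow> dm n \<le> c"
  unfolding dmix_def using S_ne by (intro cSUP_least) auto

lemma dmix_nonneg: "0 \<le> dm n"
proof -
  obtain s where "s \<in> S" using S_ne by blast
  then show ?thesis using dmix_ge[of "(s, 0, s)" n] tv_dist_nonneg[of "zstepn P Rw n (s, 0, s)" \<zeta>] by simp
qed

lemma dmix_le_1: "dm n \<le> 1"
  by (rule dmix_leI) (rule tv_dist_le_1)

text \<open>The supremum in \<open>dmix\<close> also ranges over triples whose reward is not \<open>Rw s s'\<close>; such a
  triple is never visited again, so \<open>dmix 0 = 1\<close> and the mixing time is positive.\<close>

lemma one_le_dmix_0: "1 \<le> dm 0"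
proof -
  obtain s where s: "s \<in> S" using S_ne by blast
  have "finite ((\<lambda>(a, b). Rw a b) ` (S \<times> S))" using finite_S by simp
  then obtain r where r: "r \<notin> (\<lambda>(a, b). Rw a b) ` (S \<times> S)"
    using ex_new_if_finite[OF infinite_UNIV_char_0] by blast
  have "(s, r, s) \<notin> set_pmf \<zeta>" using set_zstat r s unfolding zset_def by auto
  then have "1 \<le> tv_dist (return_pmf (s, r, s)) \<zeta>"
    using tv_dist_ge[of "return_pmf (s, r, s)" "{(s, r, s)}" \<zeta>] by (simp add: measure_pmf_single set_pmf_iff)
  also have "\<dots> \<le> dm 0" using dmix_ge[of "(s, r, s)" 0] s by simp
  finally show ?thesis .
qed

lemma dmix_add_le:
  assumes "0 \<le> \<delta>" "\<And>x y. x \<in> Z\<^sub>0 \<Longrightarrow> y \<in> Z\<^sub>0 \<Longrightarrow> tv_dist (zstepn P Rw b x) (zstepn P Rw b y) \<le> \<delta>"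
  shows "dm (a + b) \<le> \<delta> * dm a"
proof (rule dmix_leI)
  fix z assume z: "z \<in> Z\<^sub>0"
  have W: "finite (insert z Z)" "insert z Z \<subseteq> Z\<^sub>0" using finite_Z Z_subset z by auto
  have s1: "set_pmf (zstepn P Rw a z) \<subseteq> insert z Z" using z by (intro set_zstepn_subset[OF P_closed]) auto
  have s2: "set_pmf \<zeta> \<subseteq> insert z Z" using set_zstat by auto
  have "tv_dist (zstepn P Rw (a + b) z) \<zeta> =
        tv_dist (bind_pmf (zstepn P Rw a z) (zstepn P Rw b)) (bind_pmf \<zeta> (zstepn P Rw b))"
    by (simp add: zstepn_add bind_zstat_zstepn[OF mu_stationary])
  also have "\<dots> \<le> \<delta> * tv_dist (zstepn P Rw a z) \<zeta>"
    using W(2) assms by (intro tv_dist_bind_pmf_le[OF W(1) s1 s2]) blast+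
  also have "\<dots> \<le> \<delta> * dm a" using dmix_ge[OF z] assms(1) by (intro mult_left_mono)
  finally show "tv_dist (zstepn P Rw (a + b) z) \<zeta> \<le> \<delta> * dm a" .
qed

lemma dmix_add_le_mult: "dm (a + b) \<le> 2 * dm b * dm a"
proof (rule dmix_add_le)
  fix x y assume "x \<in> Z\<^sub>0" "y \<in> Z\<^sub>0"
  then show "tv_dist (zstepn P Rw b x) (zstepn P Rw b y) \<le> 2 * dm b"
    using tv_dist_triangle[where p="zstepn P Rw b x" and q=\<zeta> and r="zstepn P Rw b y"]
      dmix_ge[of x b] dmix_ge[of y b]
    by (simp add: tv_dist_commute[of \<zeta>])
qed (simp add: dmix_nonneg)

lemma dmix_antimono: "m \<le> n \<Longrightarrow> dm n \<le> dm m"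
proof (induction n rule: dec_induct)
  case (step n)
  then show ?case using dmix_add_le[of 1 1 n] by (simp add: tv_dist_le_1)
qed simp

lemma doeblin_tv_dist_bound:
  "\<exists>N \<epsilon>. 0 < \<epsilon> \<and> \<epsilon> \<le> 1 \<and>
     (\<forall>x\<in>Z\<^sub>0. \<forall>y\<in>Z\<^sub>0. tv_dist (zstepn P Rw (Suc N) x) (zstepn P Rw (Suc N) y) \<le> 1 - \<epsilon>)"
proof -
  obtain N where N: "\<And>x y. x \<in> S \<Longrightarrow> y \<in> S \<Longrightarrow> y \<in> set_pmf (stepn P N x)"
    using stepn_primitive[OF finite_S] ergodic unfolding ergodic_on_def by blast
  obtain y0 where y0: "y0 \<in> S" using S_ne by blast
  obtain y1 where y1: "y1 \<in> set_pmf (P y0)" using set_pmf_not_empty[of "P y0"] by blast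
  \<comment> \<open>every start reaches the sample \<open>w0\<close> after \<open>N + 1\<close> steps with probability at least \<open>\<epsilon>\<close>\<close>
  define w0 where "w0 = (y0, Rw y0 y1, y1)"
  define f where "f s = pmf (bind_pmf (stepn P N s) (zfirst P Rw)) w0" for s
  define \<epsilon> where "\<epsilon> = Min (f ` S)"
  have "w0 \<in> set_pmf (bind_pmf (stepn P N s) (zfirst P Rw))" if "s \<in> S" for s
    using N[OF that y0] y1 unfolding zfirst_def w0_def by auto
  then have "0 < \<epsilon>" unfolding \<epsilon>_def f_def using finite_S S_ne by (subst Min_gr_iff) (auto simp: pmf_positive)
  have \<epsilon>_le: "\<epsilon> \<le> f s" if "s \<in> S" for s unfolding \<epsilon>_def using finite_S that by simp
  have "\<epsilon> \<le> 1" using \<epsilon>_le[OF y0] pmf_le_1 unfolding f_def by (meson order_trans)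
  moreover have "tv_dist (zstepn P Rw (Suc N) x) (zstepn P Rw (Suc N) y) \<le> 1 - \<epsilon>"
    if "x \<in> Z\<^sub>0" "y \<in> Z\<^sub>0" for x y
    using that \<epsilon>_le[of "snd (snd x)"] \<epsilon>_le[of "snd (snd y)"] unfolding zstepn_Suc_eq_stepn f_def
    by (intro tv_dist_le_1_minus_common_mass[where x=w0]) auto
  ultimately show ?thesis using \<open>0 < \<epsilon>\<close> by blast
qed

lemma dmix_eventually_le: "\<exists>n. dm n \<le> 1/4"
proof -
  obtain N \<epsilon> where \<epsilon>: "0 < \<epsilon>" "\<epsilon> \<le> 1"
    and tv: "\<And>x y. x \<in> Z\<^sub>0 \<Longrightarrow> y \<in> Z\<^sub>0 \<Longrightarrow> tv_dist (zstepn P Rw (Suc N) x) (zstepn P Rw (Suc N) y) \<le> 1 - \<epsilon>"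
    using doeblin_tv_dist_bound by blast
  have decay: "dm (k * Suc N) \<le> (1 - \<epsilon>) ^ k" for k
  proof (induction k)
    case (Suc k)
    have "dm (k * Suc N + Suc N) \<le> (1 - \<epsilon>) * dm (k * Suc N)"
      using \<epsilon> tv by (intro dmix_add_le) auto
    also have "\<dots> \<le> (1 - \<epsilon>) * (1 - \<epsilon>) ^ k" using Suc \<epsilon> by (intro mult_left_mono) auto
    finally show ?case by (simp add: ac_simps)
  qed (simp add: dmix_le_1)
  obtain k where "(1 - \<epsilon>) ^ k < 1/4" using real_arch_pow_inv[of "1/4" "1 - \<epsilon>"] \<epsilon> by auto
  then show ?thesis using decay[of k] by (intro exI[of _ "k * Suc N"]) simp
qed

lemma dmix_tau_mix: "dm tau \<le> 1/4"
  using Inf_nat_def1[of "{n. dm n \<le> 1/4}"] dmix_eventually_le unfolding tau_mix_def by auto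

lemma tau_mix_pos: "1 \<le> tau"
  using dmix_tau_mix one_le_dmix_0 by (cases tau) auto

lemma dmix_mult_tau_mix: "dm (k * tau) \<le> (1/2) ^ k"
proof (induction k)
  case (Suc k)
  have "dm (k * tau + tau) \<le> 2 * dm tau * dm (k * tau)" by (rule dmix_add_le_mult)
  also have "\<dots> \<le> 2 * (1/4) * (1/2) ^ k"
    using dmix_tau_mix Suc dmix_nonneg by (intro mult_mono) auto
  finally show ?case by (simp add: add.commute)
qed (simp add: dmix_le_1)

definition mix_decay :: "nat \<Rightarrow> real" where
  "mix_decay n = (1/2) ^ (n div tau)"

lemma mix_decay_nonneg: "0 \<le> mix_decay n"
  unfolding mix_decay_def by simp

lemma dmix_le_mix_decay: "dm n \<le> mix_decay n"
  using dmix_antimono[of "n div tau * tau" n] dmix_mult_tau_mix[of "n div tau"]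
  unfolding mix_decay_def by simp

lemma sum_mix_decay_le: "(\<Sum>k<n. mix_decay k) \<le> 2 * tau"
proof -
  have const: "mix_decay k = (1/2) ^ m" if "k \<in> {m * tau..<m * tau + tau}" for k m
  proof -
    have "k div tau = m" using that tau_mix_pos by (intro div_nat_eqI) (auto simp: algebra_simps)
    then show ?thesis unfolding mix_decay_def by simp
  qed
  have "(\<Sum>k<n. mix_decay k) \<le> (\<Sum>k<n * tau. mix_decay k)"
    using tau_mix_pos by (intro sum_mono2) (auto simp: mix_decay_nonneg)
  also have "\<dots> = (\<Sum>m<n. sum mix_decay {m * tau..<m * tau + tau})"
    by (rule sum.nat_group[symmetric])
  also have "\<dots> = real tau * (\<Sum>m<n. (1/2) ^ m)"
    by (simp add: const sum_distrib_left)
  also have "(\<Sum>m<n. (1/2::real) ^ m) = 2 - 2 * (1/2) ^ n"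
    by (induction n) auto
  also have "real tau * (2 - 2 * (1/2) ^ n) \<le> real tau * 2"
    by (intro mult_left_mono) auto
  finally show ?thesis by simp
qed

lemma sum_mix_decay_dist_le:
  assumes "i < N"
  shows "(\<Sum>j<N. mix_decay (if i \<le> j then j - i else i - j)) \<le> 4 * tau"
proof -
  have "(\<Sum>j\<in>{j\<in>{..<N}. i \<le> j}. mix_decay (j - i)) = (\<Sum>k<N - i. mix_decay k)"
  proof -
    have "{j\<in>{..<N}. i \<le> j} = {0 + i..<(N - i) + i}" using assms by auto
    then show ?thesis by (simp only: sum.shift_bounds_nat_ivl) (simp add: lessThan_atLeast0)
  qed
  moreover have "(\<Sum>j\<in>{j\<in>{..<N}. j \<le> i}. mix_decay (i - j)) = (\<Sum>k<Suc i. mix_decay k)"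
  proof -
    have "{j\<in>{..<N}. j \<le> i} = {..<Suc i}" using assms by auto
    then show ?thesis using sum.nat_diff_reindex[of mix_decay "Suc i"] by simp
  qed
  moreover have "(\<Sum>j<N. mix_decay (if i \<le> j then j - i else i - j)) \<le>
      (\<Sum>j<N. (if i \<le> j then mix_decay (j - i) else 0) + (if j \<le> i then mix_decay (i - j) else 0))"
    by (intro sum_mono) (auto simp: mix_decay_nonneg)
  moreover have "\<dots> =
      (\<Sum>j\<in>{j\<in>{..<N}. i \<le> j}. mix_decay (j - i)) + (\<Sum>j\<in>{j\<in>{..<N}. j \<le> i}. mix_decay (i - j))"
    by (simp only: sum.inter_filter[OF finite_lessThan] sum.distrib)
  ultimately show ?thesis
    using sum_mix_decay_le[of "N - i"] sum_mix_decay_le[of "Suc i"] by linarith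
qed

end

section \<open>Concentration of sample averages along the chain\<close>

definition sample_avg :: "nat \<Rightarrow> (sample \<Rightarrow> nat \<Rightarrow> real) \<Rightarrow> sample list \<Rightarrow> nat \<Rightarrow> real" where
  "sample_avg N f zs = (\<lambda>i. (1 / real N) * (\<Sum>k<N. f (zs ! k) i))"

context td_problem
begin

lemma nth_samples_in_Z: "s \<in> S \<Longrightarrow> p \<in> set_pmf (samples P Rw N s) \<Longrightarrow> k < N \<Longrightarrow> fst p ! k \<in> Z"
  using set_samples[OF P_closed] by (metis nth_mem subsetD)

context
  fixes f :: "sample \<Rightarrow> nat \<Rightarrow> real" and m :: "nat \<Rightarrow> real" and G :: real
  assumes f_bound: "\<And>z. z \<in> Z \<Longrightarrow> vnorm d (f z) \<le> G"
    and f_mean: "\<And>b. measure_pmf.expectation \<zeta> (\<lambda>z. vinner d b (f z)) = vinner d b m"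
begin

lemma bound_nonneg: "0 \<le> G"
proof -
  obtain z where "z \<in> set_pmf \<zeta>" using set_pmf_not_empty[of \<zeta>] by blast
  then show ?thesis using f_bound[of z] set_zstat vnorm_nonneg[of d "f z"] by force
qed

lemma abs_vinner_f_le: "z \<in> Z \<Longrightarrow> \<bar>vinner d b (f z)\<bar> \<le> vnorm d b * G"
  by (rule abs_vinner_le_bound[OF order.refl f_bound])

lemma vnorm_mean_le: "vnorm d m \<le> G"
proof (rule vnorm_le_if_vinner_le[OF _ bound_nonneg])
  fix b
  have "measure_pmf.expectation \<zeta> (\<lambda>z. vinner d b (f z)) \<le> vnorm d b * G"
    using abs_vinner_f_le set_zstat
    by (intro integral_le_measure_pmf[where B="vnorm d b * G"]) (meson abs_le_iff subsetD)+
  then show "vinner d b m \<le> vnorm d b * G" by (simp add: f_mean)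
qed

lemma vnorm_dev_le: "z \<in> Z \<Longrightarrow> vnorm d (\<lambda>i. f z i - m i) \<le> 2 * G"
  using vnorm_diff_le[of d "f z" m] f_bound[of z] vnorm_mean_le by linarith

lemma abs_vinner_dev_le: "z \<in> Z \<Longrightarrow> \<bar>vinner d b (f z) - vinner d b m\<bar> \<le> vnorm d b * (2 * G)"
  using abs_vinner_le_bound[OF order.refl vnorm_dev_le] by (simp add: vinner_diff_right)

lemma integral_vinner_dev_le_tv_dist:
  assumes "set_pmf p \<subseteq> Z"
  shows "measure_pmf.expectation p (\<lambda>z. vinner d b (f z) - vinner d b m) \<le> vnorm d b * (2 * G) * tv_dist p \<zeta>"
proof -
  have "integrable (measure_pmf p) (\<lambda>z. vinner d b (f z))"
    using assms abs_vinner_f_le by (intro integrable_measure_pmf_bounded) blast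
  then have "measure_pmf.expectation p (\<lambda>z. vinner d b (f z) - vinner d b m) =
        measure_pmf.expectation p (\<lambda>z. vinner d b (f z)) - measure_pmf.expectation \<zeta> (\<lambda>z. vinner d b (f z))"
    by (simp add: f_mean measure_pmf.prob_space)
  also have "\<dots> = (\<Sum>z\<in>Z. (pmf p z - pmf \<zeta> z) * vinner d b (f z))"
    by (simp add: integral_measure_pmf_finite[OF finite_Z assms] integral_measure_pmf_finite[OF finite_Z set_zstat]
        sum_subtractf left_diff_distrib)
  also have "\<dots> \<le> 2 * (vnorm d b * G) * tv_dist p \<zeta>"
    by (rule sum_pmf_diff_mult_le_tv_dist[OF finite_Z assms set_zstat abs_vinner_f_le])
  finally show ?thesis by (simp add: mult_ac)
qed

lemma integral_vinner_dev_zstepn_le: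
  assumes "x \<in> Z"
  shows "measure_pmf.expectation (zstepn P Rw k x) (\<lambda>z. vinner d b (f z) - vinner d b m)
           \<le> vnorm d b * (2 * G) * mix_decay k"
proof -
  have "x \<in> Z\<^sub>0" using assms Z_subset by blast
  then have "tv_dist (zstepn P Rw k x) \<zeta> \<le> mix_decay k"
    using dmix_ge dmix_le_mix_decay order_trans by blast
  then have "vnorm d b * (2 * G) * tv_dist (zstepn P Rw k x) \<zeta> \<le> vnorm d b * (2 * G) * mix_decay k"
    using bound_nonneg vnorm_nonneg[of d b] by (intro mult_left_mono) auto
  then show ?thesis
    using integral_vinner_dev_le_tv_dist[OF set_zstepn[OF assms], of k b] by linarith
qed

lemma integral_vinner_dev_nth_le:
  assumes "s \<in> S" "k < N"
  shows "measure_pmf.expectation (samples P Rw N s) (\<lambda>p. vinner d b (f (fst p ! k)) - vinner d b m)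
           \<le> vnorm d b * (2 * G) * mix_decay k"
proof -
  let ?F = "\<lambda>z. vinner d b (f z) - vinner d b m"
  have start: "set_pmf (zfirst P Rw s) \<subseteq> Z" by (rule set_zfirst_subset[OF P_closed assms(1)])
  have "measure_pmf.expectation (samples P Rw N s) (\<lambda>p. ?F (fst p ! k)) =
        measure_pmf.expectation (bind_pmf (zfirst P Rw s) (zstepn P Rw k)) ?F"
    by (simp flip: map_nth_samples[OF assms(2)])
  also have "\<dots> = measure_pmf.expectation (zfirst P Rw s) (\<lambda>x. measure_pmf.expectation (zstepn P Rw k x) ?F)"
  proof (rule integral_bind_pmf_bounded)
    fix x assume "x \<in> set_pmf (bind_pmf (zfirst P Rw s) (zstepn P Rw k))"
    then have "x \<in> Z" using start set_zstepn by fastforce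
    then show "\<bar>?F x\<bar> \<le> vnorm d b * (2 * G)" by (rule abs_vinner_dev_le)
  qed
  also have "\<dots> \<le> vnorm d b * (2 * G) * mix_decay k"
  proof (rule integral_le_measure_pmf)
    fix x assume "x \<in> set_pmf (zfirst P Rw s)"
    then have "x \<in> Z" using start by blast
    show "\<bar>measure_pmf.expectation (zstepn P Rw k x) ?F\<bar> \<le> vnorm d b * (2 * G)"
      using set_zstepn[OF \<open>x \<in> Z\<close>] abs_vinner_dev_le by (intro abs_integral_le_measure_pmf) blast
    show "measure_pmf.expectation (zstepn P Rw k x) ?F \<le> vnorm d b * (2 * G) * mix_decay k"
      using \<open>x \<in> Z\<close> by (rule integral_vinner_dev_zstepn_le)
  qed
  finally show ?thesis .
qed

lemma integral_vinner_dev_pair_le: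
  assumes "s \<in> S" "i < j" "j < N"
  shows "measure_pmf.expectation (samples P Rw N s)
           (\<lambda>p. vinner d (\<lambda>l. f (fst p ! i) l - m l) (\<lambda>l. f (fst p ! j) l - m l))
         \<le> 2 * G * (2 * G) * mix_decay (j - i)"
proof -
  define H where "H = (\<lambda>(a, w). vinner d (\<lambda>l. f a l - m l) (\<lambda>l. f w l - m l))"
  define \<rho> where "\<rho> = map_pmf (\<lambda>p. fst p ! i) (samples P Rw N s)"
  have \<rho>: "set_pmf \<rho> \<subseteq> Z" unfolding \<rho>_def using nth_samples_in_Z[OF assms(1)] assms by auto
  have H_bound: "\<bar>H (a, w)\<bar> \<le> 2 * G * (2 * G)" if "a \<in> Z" "w \<in> Z" for a w
    unfolding H_def prod.case by (rule abs_vinner_le_bound[OF vnorm_dev_le[OF that(1)] vnorm_dev_le[OF that(2)]])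
  have "measure_pmf.expectation (samples P Rw N s)
           (\<lambda>p. vinner d (\<lambda>l. f (fst p ! i) l - m l) (\<lambda>l. f (fst p ! j) l - m l)) =
        measure_pmf.expectation (bind_pmf \<rho> (\<lambda>a. map_pmf (Pair a) (zstepn P Rw (j - i) a))) H"
    unfolding \<rho>_def map_nth_pair_samples[OF assms(2,3), symmetric] by (simp add: H_def)
  also have "\<dots> = measure_pmf.expectation \<rho> (\<lambda>a. measure_pmf.expectation (map_pmf (Pair a) (zstepn P Rw (j - i) a)) H)"
  proof (rule integral_bind_pmf_bounded)
    fix x assume "x \<in> set_pmf (bind_pmf \<rho> (\<lambda>a. map_pmf (Pair a) (zstepn P Rw (j - i) a)))"
    then obtain a w where "x = (a, w)" "a \<in> Z" "w \<in> Z" using \<rho> set_zstepn by fastforce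
    then show "\<bar>H x\<bar> \<le> 2 * G * (2 * G)" using H_bound by simp
  qed
  also have "\<dots> = measure_pmf.expectation \<rho> (\<lambda>a. measure_pmf.expectation (zstepn P Rw (j - i) a) (\<lambda>w. H (a, w)))"
    by simp
  also have "\<dots> \<le> 2 * G * (2 * G) * mix_decay (j - i)"
  proof (rule integral_le_measure_pmf)
    fix a assume "a \<in> set_pmf \<rho>"
    then have a: "a \<in> Z" using \<rho> by blast
    show "\<bar>measure_pmf.expectation (zstepn P Rw (j - i) a) (\<lambda>w. H (a, w))\<bar> \<le> 2 * G * (2 * G)"
      using set_zstepn[OF a] H_bound[OF a] by (intro abs_integral_le_measure_pmf) blast
    have "measure_pmf.expectation (zstepn P Rw (j - i) a) (\<lambda>w. H (a, w)) \<le>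
          vnorm d (\<lambda>l. f a l - m l) * (2 * G) * mix_decay (j - i)"
      unfolding H_def using integral_vinner_dev_zstepn_le[OF a] by (simp add: vinner_diff_right)
    also have "\<dots> \<le> 2 * G * (2 * G) * mix_decay (j - i)"
      using vnorm_dev_le[OF a] bound_nonneg mix_decay_nonneg[of "j - i"] by (intro mult_right_mono) auto
    finally show "measure_pmf.expectation (zstepn P Rw (j - i) a) (\<lambda>w. H (a, w)) \<le> 2 * G * (2 * G) * mix_decay (j - i)" .
  qed
  finally show ?thesis .
qed

lemma vnorm_sample_avg_dev_power2:
  assumes "0 < N"
  shows "(vnorm d (\<lambda>l. sample_avg N f zs l - m l))\<^sup>2 =
         (1 / real N)\<^sup>2 * (\<Sum>i<N. \<Sum>j<N. vinner d (\<lambda>l. f (zs ! i) l - m l) (\<lambda>l. f (zs ! j) l - m l))"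
proof -
  have avg: "(\<lambda>l. sample_avg N f zs l - m l) = (\<lambda>l. (1 / real N) * (\<Sum>k<N. f (zs ! k) l - m l))"
    using assms by (auto simp: sample_avg_def sum_subtractf field_simps)
  show ?thesis
    unfolding avg vnorm_power2 vinner_scale_left vinner_scale_right vinner_sum_left vinner_sum_right
    by (simp add: power2_eq_square sum_distrib_left)
qed

lemma integral_vinner_dev_cross_le:
  assumes s: "s \<in> S" and "i < N" "j < N"
  shows "measure_pmf.expectation (samples P Rw N s)
           (\<lambda>p. vinner d (\<lambda>l. f (fst p ! i) l - m l) (\<lambda>l. f (fst p ! j) l - m l))
         \<le> 2 * G * (2 * G) * mix_decay (if i \<le> j then j - i else i - j)"
proof -
  consider "i = j" | "i < j" | "j < i" by linarith
  then show ?thesis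
  proof cases
    case 1
    have "\<bar>vinner d (\<lambda>l. f (fst p ! i) l - m l) (\<lambda>l. f (fst p ! i) l - m l)\<bar> \<le> 2 * G * (2 * G)"
      if "p \<in> set_pmf (samples P Rw N s)" for p
      using nth_samples_in_Z[OF s that \<open>i < N\<close>] by (intro abs_vinner_le_bound vnorm_dev_le)
    then show ?thesis
      using 1 by (simp add: mix_decay_def integral_le_measure_pmf[where B="2 * G * (2 * G)"] abs_le_iff)
  next
    case 2
    then show ?thesis using integral_vinner_dev_pair_le[OF s 2 \<open>j < N\<close>] by simp
  next
    case 3
    then show ?thesis using integral_vinner_dev_pair_le[OF s 3 \<open>i < N\<close>] by (simp add: vinner_commute)
  qed
qed

lemma integral_vnorm_sample_avg_dev_le:
  assumes s: "s \<in> S" and "0 < N"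
  shows "measure_pmf.expectation (samples P Rw N s) (\<lambda>p. (vnorm d (\<lambda>l. sample_avg N f (fst p) l - m l))\<^sup>2)
         \<le> 16 * G\<^sup>2 * tau / N"
proof -
  define X where "X i j (p :: sample list \<times> nat) = vinner d (\<lambda>l. f (fst p ! i) l - m l) (\<lambda>l. f (fst p ! j) l - m l)" for i j p
  have X_int: "integrable (measure_pmf (samples P Rw N s)) (X i j)" if "i < N" "j < N" for i j
    unfolding X_def using nth_samples_in_Z[OF s] that
    by (intro integrable_measure_pmf_bounded[where B="2 * G * (2 * G)"] abs_vinner_le_bound vnorm_dev_le) auto
  have "measure_pmf.expectation (samples P Rw N s) (\<lambda>p. \<Sum>i<N. \<Sum>j<N. X i j p) =
        (\<Sum>i<N. measure_pmf.expectation (samples P Rw N s) (\<lambda>p. \<Sum>j<N. X i j p))"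
    using X_int by (intro Bochner_Integration.integral_sum Bochner_Integration.integrable_sum) auto
  also have "\<dots> = (\<Sum>i<N. \<Sum>j<N. measure_pmf.expectation (samples P Rw N s) (X i j))"
    using X_int by (intro sum.cong refl Bochner_Integration.integral_sum) auto
  also have "\<dots> \<le> (\<Sum>i<N. 2 * G * (2 * G) * (4 * tau))"
  proof (intro sum_mono)
    fix i assume "i \<in> {..<N}"
    then have "(\<Sum>j<N. 2 * G * (2 * G) * mix_decay (if i \<le> j then j - i else i - j)) \<le> 2 * G * (2 * G) * (4 * tau)"
      using sum_mix_decay_dist_le[of i N] bound_nonneg
      by (simp only: sum_distrib_left[symmetric]) (intro mult_left_mono, auto)
    moreover have "(\<Sum>j<N. measure_pmf.expectation (samples P Rw N s) (X i j)) \<le>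
        (\<Sum>j<N. 2 * G * (2 * G) * mix_decay (if i \<le> j then j - i else i - j))"
      using integral_vinner_dev_cross_le[OF s] \<open>i \<in> {..<N}\<close> unfolding X_def by (intro sum_mono) simp
    ultimately show "(\<Sum>j<N. measure_pmf.expectation (samples P Rw N s) (X i j)) \<le> 2 * G * (2 * G) * (4 * tau)"
      by linarith
  qed
  finally have "(1 / real N)\<^sup>2 * measure_pmf.expectation (samples P Rw N s) (\<lambda>p. \<Sum>i<N. \<Sum>j<N. X i j p)
                \<le> (1 / real N)\<^sup>2 * (real N * (2 * G * (2 * G) * (4 * tau)))"
    by (intro mult_left_mono) auto
  then show ?thesis
    using \<open>0 < N\<close> unfolding vnorm_sample_avg_dev_power2[OF \<open>0 < N\<close>] X_def
    by (simp add: power2_eq_square)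
qed

lemma integral_vinner_sample_avg_dev_le:
  assumes s: "s \<in> S" and "0 < N"
  shows "measure_pmf.expectation (samples P Rw N s) (\<lambda>p. vinner d b (sample_avg N f (fst p)) - vinner d b m)
         \<le> vnorm d b * (2 * G) * (2 * tau) / N"
proof -
  have avg: "vinner d b (sample_avg N f zs) - vinner d b m =
             (1 / real N) * (\<Sum>k<N. vinner d b (f (zs ! k)) - vinner d b m)" for zs
    using \<open>0 < N\<close> unfolding sample_avg_def vinner_scale_right vinner_sum_right
    by (simp add: sum_subtractf right_diff_distrib)
  have "measure_pmf.expectation (samples P Rw N s) (\<lambda>p. vinner d b (sample_avg N f (fst p)) - vinner d b m)
        = (1 / real N) * (\<Sum>k<N. measure_pmf.expectation (samples P Rw N s) (\<lambda>p. vinner d b (f (fst p ! k)) - vinner d b m))"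
  proof -
    have "integrable (measure_pmf (samples P Rw N s)) (\<lambda>p. vinner d b (f (fst p ! k)) - vinner d b m)"
      if "k < N" for k
      using abs_vinner_dev_le nth_samples_in_Z[OF s _ that] by (intro integrable_measure_pmf_bounded) blast
    then show ?thesis unfolding avg by (simp add: Bochner_Integration.integral_sum)
  qed
  also have "\<dots> \<le> (1 / real N) * (\<Sum>k<N. vnorm d b * (2 * G) * mix_decay k)"
    using integral_vinner_dev_nth_le[OF s] by (intro mult_left_mono sum_mono) auto
  also have "\<dots> = (1 / real N) * (vnorm d b * (2 * G)) * (\<Sum>k<N. mix_decay k)"
    by (simp add: sum_distrib_left)
  also have "\<dots> \<le> (1 / real N) * (vnorm d b * (2 * G)) * (2 * tau)"
    using sum_mix_decay_le[of N] bound_nonneg vnorm_nonneg[of d b] by (intro mult_left_mono) auto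
  finally show ?thesis by simp
qed

end

end

lemma running_average_power2_le:
  fixes t c \<alpha> \<beta> :: real
  assumes "0 < t"
  shows "(t + 1) * (c - (\<alpha> + \<beta>) / (t + 1))\<^sup>2 \<le> t * (c - \<alpha> / t)\<^sup>2 + (c - \<beta>)\<^sup>2"
proof -
  define x where "x = c - \<alpha> / t"
  define y where "y = c - \<beta>"
  have "t * x = t * c - \<alpha>" using assms by (simp add: x_def field_simps)
  then have avg: "c - (\<alpha> + \<beta>) / (t + 1) = (t * x + y) / (t + 1)"
    unfolding y_def using assms by (simp add: field_simps)
  have "0 \<le> t * (x - y)\<^sup>2" using assms by simp
  then have "(t * x + y)\<^sup>2 \<le> (t + 1) * (t * x\<^sup>2 + y\<^sup>2)" by (simp add: power2_eq_square algebra_simps)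
  then have "(t * x + y)\<^sup>2 / (t + 1) \<le> t * x\<^sup>2 + y\<^sup>2" using assms by (simp add: field_simps)
  moreover have "(t + 1) * ((t * x + y) / (t + 1))\<^sup>2 = (t * x + y)\<^sup>2 / (t + 1)"
    using assms by (simp add: power2_eq_square)
  ultimately show ?thesis unfolding avg x_def[symmetric] y_def[symmetric] by simp
qed

context td_problem
begin

abbreviation "G \<equiv> rmax + 2 * R"

lemma rmax_nonneg: "0 \<le> rmax"
  using S_ne Rw_bound by (metis abs_ge_zero all_not_in_conv order_trans)

lemma G_pos: "0 < G"
  using rmax_nonneg R_pos by simp

lemma sum_pmf_P: "s \<in> S \<Longrightarrow> (\<Sum>s'\<in>S. pmf (P s) s') = 1"
  using P_closed finite_S by (intro sum_pmf_eq_1) auto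

lemma sum_pmf_mu: "(\<Sum>s\<in>S. pmf \<mu> s) = 1"
  using set_mu finite_S by (intro sum_pmf_eq_1) auto

lemma sum_mu_P_left: "(\<Sum>s\<in>S. \<Sum>s'\<in>S. pmf \<mu> s * pmf (P s) s' * h s) = (\<Sum>s\<in>S. pmf \<mu> s * h s)"
proof (rule sum.cong[OF refl])
  fix s assume "s \<in> S"
  have "(\<Sum>s'\<in>S. pmf \<mu> s * pmf (P s) s' * h s) = pmf \<mu> s * h s * (\<Sum>s'\<in>S. pmf (P s) s')"
    by (simp add: sum_distrib_left mult_ac)
  then show "(\<Sum>s'\<in>S. pmf \<mu> s * pmf (P s) s' * h s) = pmf \<mu> s * h s"
    using sum_pmf_P[OF \<open>s \<in> S\<close>] by simp
qed

lemma sum_mu_P_right: "(\<Sum>s\<in>S. \<Sum>s'\<in>S. pmf \<mu> s * pmf (P s) s' * h s') = (\<Sum>s'\<in>S. pmf \<mu> s' * h s')"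
proof -
  have stationary: "(\<Sum>s\<in>S. pmf \<mu> s * pmf (P s) s') = pmf \<mu> s'" for s'
  proof -
    have "(\<Sum>s\<in>S. pmf \<mu> s * pmf (P s) s') = measure_pmf.expectation \<mu> (\<lambda>s. pmf (P s) s')"
      by (rule integral_measure_pmf_finite[OF finite_S set_mu, symmetric])
    also have "\<dots> = pmf \<mu> s'" using pmf_bind[of \<mu> P s'] mu_stationary by simp
    finally show ?thesis .
  qed
  have "(\<Sum>s\<in>S. \<Sum>s'\<in>S. pmf \<mu> s * pmf (P s) s' * h s') = (\<Sum>s'\<in>S. (\<Sum>s\<in>S. pmf \<mu> s * pmf (P s) s') * h s')"
    by (subst sum.swap) (simp add: sum_distrib_right)
  then show ?thesis by (simp only: stationary)
qed

lemma abs_Vf_le: "s \<in> S \<Longrightarrow> vnorm d \<theta> \<le> R \<Longrightarrow> \<bar>Vf d \<phi> \<theta> s\<bar> \<le> R"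
  unfolding Vf_def using abs_vinner_le_bound[OF phi_norm] by fastforce

lemma vnorm_sgrad_le:
  assumes "vnorm d \<theta> \<le> R" "z \<in> Z"
  shows "vnorm d (sgrad d \<phi> \<gamma> \<theta> z) \<le> G"
proof -
  obtain s s' where z: "z = (s, Rw s s', s')" "s \<in> S" "s' \<in> S" using assms(2) unfolding zset_def by auto
  define c where "c = Rw s s' + \<gamma> * Vf d \<phi> \<theta> s' - Vf d \<phi> \<theta> s"
  have "\<gamma> * \<bar>Vf d \<phi> \<theta> s'\<bar> \<le> 1 * R"
    using abs_Vf_le[OF z(3) assms(1)] gamma by (intro mult_mono) auto
  then have "\<bar>\<gamma> * Vf d \<phi> \<theta> s'\<bar> \<le> R" using gamma by (simp add: abs_mult)
  then have "\<bar>c\<bar> \<le> G" unfolding c_def using Rw_bound[OF z(2,3)] abs_Vf_le[OF z(2) assms(1)] by linarith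
  have "vnorm d (sgrad d \<phi> \<gamma> \<theta> z) = \<bar>c\<bar> * vnorm d (\<phi> s)"
    unfolding sgrad_def c_def z by (simp add: vnorm_scale)
  also have "\<dots> \<le> G * 1" using \<open>\<bar>c\<bar> \<le> G\<close> phi_norm[OF z(2)] by (intro mult_mono) (auto simp: vnorm_nonneg)
  finally show ?thesis by simp
qed

lemma integral_zstat:
  "measure_pmf.expectation \<zeta> h = (\<Sum>s\<in>S. \<Sum>s'\<in>S. pmf \<mu> s * pmf (P s) s' * h (s, Rw s s', s'))"
proof -
  have "measure_pmf.expectation \<zeta> h = measure_pmf.expectation \<mu> (\<lambda>s. measure_pmf.expectation (zfirst P Rw s) h)"
    unfolding zstat_eq_bind_zfirst
  proof (rule integral_bind_pmf_bounded[where B="\<Sum>z\<in>Z. \<bar>h z\<bar>"])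
    fix z assume "z \<in> set_pmf (bind_pmf \<mu> (zfirst P Rw))"
    then have "z \<in> Z" using set_zstat unfolding zstat_eq_bind_zfirst by blast
    then show "\<bar>h z\<bar> \<le> (\<Sum>z\<in>Z. \<bar>h z\<bar>)" using finite_Z by (intro member_le_sum) auto
  qed
  also have "\<dots> = (\<Sum>s\<in>S. pmf \<mu> s * (\<Sum>s'\<in>S. pmf (P s) s' * h (s, Rw s s', s')))"
    using P_closed unfolding integral_measure_pmf_finite[OF finite_S set_mu] zfirst_def
    by (intro sum.cong refl) (simp add: integral_measure_pmf_finite[OF finite_S])
  finally show ?thesis by (simp add: sum_distrib_left mult_ac)
qed

lemma vinner_gbar:
  "vinner d b (gbar S P Rw \<mu> d \<phi> \<gamma> \<theta>) = (\<Sum>s\<in>S. \<Sum>s'\<in>S. pmf \<mu> s * pmf (P s) s' *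
      ((Rw s s' + \<gamma> * Vf d \<phi> \<theta> s' - Vf d \<phi> \<theta> s) * vinner d b (\<phi> s)))"
  unfolding gbar_def vinner_def
  by (simp add: sum_distrib_left sum_distrib_right mult_ac sum.swap[of _ "{..<d}"])

lemma integral_zstat_vinner_sgrad:
  "measure_pmf.expectation \<zeta> (\<lambda>z. vinner d b (sgrad d \<phi> \<gamma> \<theta> z)) = vinner d b (gbar S P Rw \<mu> d \<phi> \<gamma> \<theta>)"
  unfolding integral_zstat vinner_gbar sgrad_def by (simp add: vinner_scale_right)

lemma vnorm_gbar_le: "vnorm d \<theta> \<le> R \<Longrightarrow> vnorm d (gbar S P Rw \<mu> d \<phi> \<gamma> \<theta>) \<le> G"
  by (rule vnorm_mean_le[OF vnorm_sgrad_le integral_zstat_vinner_sgrad])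

text \<open>Writing \<open>v = V \<theta>s - V \<theta>\<close>, the pairing is \<open>E[(v s - \<gamma> v s') v s]\<close>; by \<open>2 a b \<le> a\<^sup>2 + b\<^sup>2\<close> and
  stationarity of \<open>\<mu>\<close>, the cross term is at most \<open>\<gamma> E[v s\<^sup>2]\<close>.\<close>

lemma td_monotone:
  "(1 - \<gamma>) * errM S \<mu> d \<phi> \<theta>s \<theta> \<le> vinner d (\<lambda>i. \<theta>s i - \<theta> i) (gbar S P Rw \<mu> d \<phi> \<gamma> \<theta>)"
proof -
  define a where "a = (\<lambda>i. \<theta>s i - \<theta> i)"
  define v where "v s = vinner d (\<phi> s) a" for s
  define w where "w s s' = pmf \<mu> s * pmf (P s) s'" for s s'
  have v: "Vf d \<phi> \<theta>s s - Vf d \<phi> \<theta> s = v s" "vinner d a (\<phi> s) = v s" for s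
    unfolding Vf_def v_def a_def by (simp_all add: vinner_diff_right vinner_commute)
  have "vinner d a (gbar S P Rw \<mu> d \<phi> \<gamma> \<theta>) =
        vinner d a (gbar S P Rw \<mu> d \<phi> \<gamma> \<theta>) - vinner d a (gbar S P Rw \<mu> d \<phi> \<gamma> \<theta>s)"
    using gbar_theta_star by (simp add: vinner_def)
  also have "\<dots> = (\<Sum>s\<in>S. \<Sum>s'\<in>S. w s s' * ((v s - \<gamma> * v s') * v s))"
    unfolding vinner_gbar v(2) w_def by (simp add: sum_subtractf[symmetric] v(1)[symmetric] algebra_simps)
  also have "\<dots> \<ge> (\<Sum>s\<in>S. \<Sum>s'\<in>S. w s s' * (v s)\<^sup>2 - \<gamma> / 2 * (w s s' * (v s)\<^sup>2) - \<gamma> / 2 * (w s s' * (v s')\<^sup>2))"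
  proof (intro sum_mono)
    fix s s'
    have "0 \<le> w s s' * (\<gamma> * (v s - v s')\<^sup>2 / 2)" unfolding w_def using gamma by simp
    then show "w s s' * (v s)\<^sup>2 - \<gamma> / 2 * (w s s' * (v s)\<^sup>2) - \<gamma> / 2 * (w s s' * (v s')\<^sup>2) \<le>
               w s s' * ((v s - \<gamma> * v s') * v s)"
      by (simp add: power2_eq_square algebra_simps)
  qed
  also have "(\<Sum>s\<in>S. \<Sum>s'\<in>S. w s s' * (v s)\<^sup>2 - \<gamma> / 2 * (w s s' * (v s)\<^sup>2) - \<gamma> / 2 * (w s s' * (v s')\<^sup>2))
      = (\<Sum>s\<in>S. \<Sum>s'\<in>S. w s s' * (v s)\<^sup>2) - \<gamma> / 2 * (\<Sum>s\<in>S. \<Sum>s'\<in>S. w s s' * (v s)\<^sup>2)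
        - \<gamma> / 2 * (\<Sum>s\<in>S. \<Sum>s'\<in>S. w s s' * (v s')\<^sup>2)"
    by (simp add: sum_subtractf sum_distrib_left)
  also have "\<dots> = (1 - \<gamma>) * (\<Sum>s\<in>S. pmf \<mu> s * (v s)\<^sup>2)"
    unfolding w_def sum_mu_P_left sum_mu_P_right by (simp add: algebra_simps)
  also have "(\<Sum>s\<in>S. pmf \<mu> s * (v s)\<^sup>2) = errM S \<mu> d \<phi> \<theta>s \<theta>"
    unfolding errM_def by (simp add: v(1))
  finally show ?thesis unfolding a_def .
qed

lemma errM_nonneg: "0 \<le> errM S \<mu> d \<phi> \<theta>s \<theta>"
  unfolding errM_def by (intro sum_nonneg) simp

lemma errM_le:
  assumes "vnorm d \<theta> \<le> R"
  shows "errM S \<mu> d \<phi> \<theta>s \<theta> \<le> 4 * R\<^sup>2"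
proof -
  have "(Vf d \<phi> \<theta>s s - Vf d \<phi> \<theta> s)\<^sup>2 \<le> (2 * R)\<^sup>2" if "s \<in> S" for s
    using abs_Vf_le[OF that theta_star_norm] abs_Vf_le[OF that assms]
    by (intro power2_le_iff_abs_le[THEN iffD2]) (use R_pos in auto)
  then have "errM S \<mu> d \<phi> \<theta>s \<theta> \<le> (\<Sum>s\<in>S. pmf \<mu> s * (2 * R)\<^sup>2)"
    unfolding errM_def by (intro sum_mono mult_left_mono) auto
  then show ?thesis by (simp add: sum_distrib_right[symmetric] sum_pmf_mu power_mult_distrib)
qed

lemma errM_running_average_le:
  assumes "0 < t"
  shows "(t + 1) * errM S \<mu> d \<phi> \<theta>s (\<lambda>i. (acc i + \<theta> i) / (t + 1))
         \<le> t * errM S \<mu> d \<phi> \<theta>s (\<lambda>i. acc i / t) + errM S \<mu> d \<phi> \<theta>s \<theta>"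
proof -
  have Vf_avg: "Vf d \<phi> (\<lambda>i. (acc i + \<theta> i) / (t + 1)) s = (Vf d \<phi> acc s + Vf d \<phi> \<theta> s) / (t + 1)"
    "Vf d \<phi> (\<lambda>i. acc i / t) s = Vf d \<phi> acc s / t" for s
    unfolding Vf_def vinner_def by (simp_all add: sum_divide_distrib[symmetric] sum.distrib algebra_simps add_divide_distrib)
  show ?thesis
    unfolding errM_def Vf_avg sum_distrib_left sum.distrib[symmetric]
  proof (intro sum_mono)
    fix s
    have "pmf \<mu> s * ((t + 1) * (Vf d \<phi> \<theta>s s - (Vf d \<phi> acc s + Vf d \<phi> \<theta> s) / (t + 1))\<^sup>2)
          \<le> pmf \<mu> s * (t * (Vf d \<phi> \<theta>s s - Vf d \<phi> acc s / t)\<^sup>2 + (Vf d \<phi> \<theta>s s - Vf d \<phi> \<theta> s)\<^sup>2)"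
      by (intro mult_left_mono running_average_power2_le[OF assms]) simp
    then show "(t + 1) * (pmf \<mu> s * (Vf d \<phi> \<theta>s s - (Vf d \<phi> acc s + Vf d \<phi> \<theta> s) / (t + 1))\<^sup>2)
          \<le> t * (pmf \<mu> s * (Vf d \<phi> \<theta>s s - Vf d \<phi> acc s / t)\<^sup>2) + pmf \<mu> s * (Vf d \<phi> \<theta>s s - Vf d \<phi> \<theta> s)\<^sup>2"
      by (simp add: algebra_simps)
  qed
qed

end

section \<open>Euclidean projection onto the ball\<close>

definition radial_proj :: "nat \<Rightarrow> real \<Rightarrow> (nat \<Rightarrow> real) \<Rightarrow> (nat \<Rightarrow> real)" where
  "radial_proj d R x = (if vnorm d x \<le> R then (\<lambda>i. if i < d then x i else 0)
                        else (\<lambda>i. (R / vnorm d x) * (if i < d then x i else 0)))"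

lemma vnorm_truncate: "vnorm d (\<lambda>i. if i < d then x i else 0) = vnorm d x"
  by (rule vnorm_cong) simp

lemma radial_proj_in_Kball:
  assumes "0 < R"
  shows "radial_proj d R x \<in> Kball d R"
proof (cases "vnorm d x \<le> R")
  case False
  then have "0 < vnorm d x" using assms by simp
  then have "vnorm d (\<lambda>i. (R / vnorm d x) * (if i < d then x i else 0)) = R"
    using assms by (simp only: vnorm_scale vnorm_truncate) simp
  then show ?thesis using False unfolding radial_proj_def Kball_def inRd_def by simp
qed (simp add: radial_proj_def Kball_def inRd_def vnorm_truncate)

lemma radial_proj_nearest:
  assumes "0 < R" "y \<in> Kball d R"
  shows "vnorm d (\<lambda>i. radial_proj d R x i - x i) \<le> vnorm d (\<lambda>i. y i - x i)"
proof (cases "vnorm d x \<le> R")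
  case True
  then have "vnorm d (\<lambda>i. radial_proj d R x i - x i) = 0"
    unfolding radial_proj_def by (simp add: vnorm_eq_0_iff)
  then show ?thesis using vnorm_nonneg by simp
next
  case False
  then have pos: "0 < vnorm d x" using assms by simp
  have "vnorm d (\<lambda>i. radial_proj d R x i - x i) = vnorm d (\<lambda>i. (R / vnorm d x - 1) * x i)"
    unfolding radial_proj_def using False by (intro vnorm_cong) (simp add: algebra_simps)
  also have "\<dots> = \<bar>R / vnorm d x - 1\<bar> * vnorm d x" by (rule vnorm_scale)
  also have "\<dots> = vnorm d x - R" using pos False by (simp add: abs_if field_simps)
  also have "\<dots> \<le> vnorm d (\<lambda>i. y i - x i)"
    using vnorm_triangle[of d "\<lambda>i. x i - y i" y] assms(2) vnorm_minus_commute[of d x y]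
    by (simp add: Kball_def)
  finally show ?thesis .
qed

lemma Kball_midpoint:
  assumes "y \<in> Kball d R" "y' \<in> Kball d R"
  shows "(\<lambda>i. (y i + y' i) / 2) \<in> Kball d R"
proof -
  have "vnorm d (\<lambda>i. (y i + y' i) / 2) = vnorm d (\<lambda>i. (1/2) * (y i + y' i))" by (rule vnorm_cong) simp
  also have "\<dots> = \<bar>1/2\<bar> * vnorm d (\<lambda>i. y i + y' i)" by (rule vnorm_scale)
  also have "\<dots> \<le> (1/2) * (vnorm d y + vnorm d y')" using vnorm_triangle[of d y y'] by simp
  also have "\<dots> \<le> R" using assms unfolding Kball_def by simp
  finally show ?thesis using assms unfolding Kball_def inRd_def by simp
qed

text \<open>\<open>proj\<close> is defined by a definite description; nearest points of the ball are unique by the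
  parallelogram law, so it is the radial projection.\<close>

lemma proj_eq_radial_proj:
  assumes R: "0 < R"
  shows "proj d R x = radial_proj d R x"
  unfolding proj_def
proof (rule the_equality)
  let ?p = "radial_proj d R x"
  show "?p \<in> Kball d R \<and> (\<forall>y'\<in>Kball d R. vnorm d (\<lambda>i. ?p i - x i) \<le> vnorm d (\<lambda>i. y' i - x i))"
    using radial_proj_in_Kball[OF R] radial_proj_nearest[OF R] by blast
  fix y assume y: "y \<in> Kball d R \<and> (\<forall>y'\<in>Kball d R. vnorm d (\<lambda>i. y i - x i) \<le> vnorm d (\<lambda>i. y' i - x i))"
  define \<delta> where "\<delta> = vnorm d (\<lambda>i. ?p i - x i)"
  have "vnorm d (\<lambda>i. y i - x i) = \<delta>"
    using y radial_proj_nearest[OF R, of y] radial_proj_in_Kball[OF R, of d x] unfolding \<delta>_def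
    by (meson order_antisym)
  have "\<delta> \<le> vnorm d (\<lambda>i. ((y i - x i) + (?p i - x i)) / 2)" 
    using radial_proj_nearest[OF R Kball_midpoint[OF _ radial_proj_in_Kball[OF R]], of y d x] y
    unfolding \<delta>_def by (simp add: add_divide_distrib diff_divide_distrib)
  then have "\<delta>\<^sup>2 \<le> (vnorm d (\<lambda>i. ((y i - x i) + (?p i - x i)) / 2))\<^sup>2"
    unfolding \<delta>_def by (intro power_mono) (auto simp: vnorm_nonneg)
  moreover have "(vnorm d (\<lambda>i. ((y i - x i) + (?p i - x i)) / 2))\<^sup>2
      + (vnorm d (\<lambda>i. (y i - x i) - (?p i - x i)))\<^sup>2 / 4 = (\<delta>\<^sup>2 + \<delta>\<^sup>2) / 2"
    using vnorm_parallelogram[of d "\<lambda>i. y i - x i" "\<lambda>i. ?p i - x i"] \<open>vnorm d (\<lambda>i. y i - x i) = \<delta>\<close>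
    unfolding \<delta>_def by simp
  moreover have "a \<le> X \<Longrightarrow> X + Y / 4 = (a + a) / 2 \<Longrightarrow> Y \<le> 0" for a X Y :: real by simp
  ultimately have "(vnorm d (\<lambda>i. (y i - x i) - (?p i - x i)))\<^sup>2 \<le> 0" by blast
  then have "\<forall>i<d. y i = ?p i" using vnorm_eq_0_iff[of d "\<lambda>i. (y i - x i) - (?p i - x i)"] by simp
  moreover have "\<forall>i\<ge>d. y i = ?p i"
    using y radial_proj_in_Kball[OF R, of d x] unfolding Kball_def inRd_def by simp
  ultimately show "y = ?p" by (metis not_le ext)
qed

lemma proj_in_Kball: "0 < R \<Longrightarrow> proj d R x \<in> Kball d R"
  using proj_eq_radial_proj radial_proj_in_Kball by simp

lemma proj_nonexpansive:
  assumes R: "0 < R" and y: "y \<in> Kball d R"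
  shows "vnorm d (\<lambda>i. proj d R x i - y i) \<le> vnorm d (\<lambda>i. x i - y i)"
proof (cases "vnorm d x \<le> R")
  case True
  then have "vnorm d (\<lambda>i. proj d R x i - y i) = vnorm d (\<lambda>i. x i - y i)"
    unfolding proj_eq_radial_proj[OF R] radial_proj_def by (intro vnorm_cong) simp
  then show ?thesis by simp
next
  case False
  then have pos: "0 < vnorm d x" using R by simp
  define c where "c = R / vnorm d x"
  have c: "0 < c" "c < 1" "c * vnorm d x = R" using pos False R unfolding c_def by auto
  have "vnorm d (\<lambda>i. proj d R x i - y i) = vnorm d (\<lambda>i. c * x i - y i)"
    unfolding proj_eq_radial_proj[OF R] radial_proj_def c_def using False by (intro vnorm_cong) simp
  moreover have "(vnorm d (\<lambda>i. c * x i - y i))\<^sup>2 \<le> (vnorm d (\<lambda>i. x i - y i))\<^sup>2"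
  proof -
    \<comment> \<open>both sides expand; the difference is \<open>(1 - c) ((1 + c) |x|\<^sup>2 - 2 \<langle>x, y\<rangle>) \<ge> 0\<close> since \<open>\<langle>x, y\<rangle> \<le> |x| R\<close>\<close>
    have "vinner d x y \<le> vnorm d x * R"
      using vinner_le[of d x y] mult_left_mono[of "vnorm d y" R "vnorm d x"] y vnorm_nonneg[of d x]
      by (simp add: Kball_def)
    have "0 \<le> (1 - c) * (vnorm d x * (vnorm d x - R))" using c False pos by (intro mult_nonneg_nonneg) auto
    also have "\<dots> = (1 - c) * ((1 + c) * (vnorm d x)\<^sup>2 - 2 * (vnorm d x * R))"
      using c(3) by (simp add: power2_eq_square algebra_simps)
    also have "\<dots> \<le> (1 - c) * ((1 + c) * (vnorm d x)\<^sup>2 - 2 * vinner d x y)"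
      using c \<open>vinner d x y \<le> vnorm d x * R\<close> by (intro mult_left_mono) auto
    finally have "0 \<le> (1 - c) * ((1 + c) * (vnorm d x)\<^sup>2 - 2 * vinner d x y)" .
    moreover have "(vnorm d (\<lambda>i. c * x i))\<^sup>2 = c\<^sup>2 * (vnorm d x)\<^sup>2"
      by (simp add: vnorm_scale power_mult_distrib)
    ultimately show ?thesis
      unfolding vnorm_diff_power2 vinner_scale_left by (simp add: power2_eq_square algebra_simps)
  qed
  ultimately show ?thesis using power2_le_imp_le[OF _ vnorm_nonneg] by simp
qed

section \<open>The multilevel Monte Carlo gradient estimator\<close>

definition level_pmf :: "nat pmf" where
  "level_pmf = map_pmf Suc (geometric_pmf (1/2))"

lemma pmf_level_pmf: "1 \<le> J \<Longrightarrow> pmf level_pmf J = (1/2) ^ J"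
  unfolding level_pmf_def by (cases J) (simp_all add: pmf_map_inj')

lemma set_level_pmf: "J \<in> set_pmf level_pmf \<Longrightarrow> 1 \<le> J"
  unfolding level_pmf_def by auto

lemma integral_level_pmf_finite:
  fixes h :: "nat \<Rightarrow> real"
  assumes "\<And>J. 1 \<le> J \<Longrightarrow> J \<notin> {1..L} \<Longrightarrow> h J = 0"
  shows "measure_pmf.expectation level_pmf h = (\<Sum>J\<in>{1..L}. (1/2) ^ J * h J)"
proof -
  have "measure_pmf.expectation level_pmf h = (\<Sum>J\<in>{1..L}. h J * pmf level_pmf J)"
    by (rule integral_measure_pmf_real) (use assms set_level_pmf in auto)
  then show ?thesis by (simp add: pmf_level_pmf mult.commute)
qed

lemma integrable_level_pmf_finite:
  fixes h :: "nat \<Rightarrow> real"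
  assumes "\<And>J. 1 \<le> J \<Longrightarrow> J \<notin> {1..L} \<Longrightarrow> h J = 0"
  shows "integrable (measure_pmf level_pmf) h"
proof (rule integrable_measure_pmf_bounded[where B="\<Sum>J\<in>{1..L}. \<bar>h J\<bar>"])
  fix J assume "J \<in> set_pmf level_pmf"
  then show "\<bar>h J\<bar> \<le> (\<Sum>J\<in>{1..L}. \<bar>h J\<bar>)"
    using assms[OF set_level_pmf] by (cases "J \<in> {1..L}") (auto intro: member_le_sum sum_nonneg)
qed

lemma pow2_le_iff_le_floor_log:
  assumes "0 < T"
  shows "2 ^ j \<le> T \<longleftrightarrow> j \<le> floor_log T"
proof
  assume "2 ^ j \<le> T"
  then show "j \<le> floor_log T" using floor_log_le_iff[of "2 ^ j" T] by simp
next
  assume "j \<le> floor_log T"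
  then have "(2::nat) ^ j \<le> 2 ^ floor_log T" by (simp add: power_increasing)
  then show "2 ^ j \<le> T" using floor_log_exp2_le[OF assms] by linarith
qed

lemma floor_log_le_ln:
  assumes "0 < T"
  shows "real (floor_log T) \<le> 2 * ln (real T)"
proof -
  have "real ((2::nat) ^ floor_log T) \<le> real T"
    using floor_log_exp2_le[OF assms] by (simp only: of_nat_le_iff)
  then have "ln ((2::real) ^ floor_log T) \<le> ln (real T)" using assms by simp
  then have "real (floor_log T) * ln 2 \<le> ln (real T)" by (simp add: ln_realpow)
  moreover have "real (floor_log T) * (2/3) \<le> real (floor_log T) * ln 2"
    using ln2_ge_two_thirds by (intro mult_left_mono) auto
  moreover have "0 \<le> ln (real T)" using assms by simp
  ultimately show ?thesis by linarith
qed

lemma gavg_eq_sample_avg: "gavg d \<phi> \<gamma> \<theta> zs j = sample_avg (2 ^ j) (sgrad d \<phi> \<gamma> \<theta>) zs"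
  unfolding gavg_def sample_avg_def by simp

lemma integral_gavg_prefix:
  fixes F :: "(nat \<Rightarrow> real) \<Rightarrow> real"
  assumes "j \<le> J"
  shows "measure_pmf.expectation (samples P Rw (2 ^ J) s) (\<lambda>p. F (gavg d \<phi> \<gamma> \<theta> (fst p) j)) =
         measure_pmf.expectation (samples P Rw (2 ^ j) s) (\<lambda>p. F (gavg d \<phi> \<gamma> \<theta> (fst p) j))"
proof -
  have "gavg d \<phi> \<gamma> \<theta> (take (2 ^ j) zs) j = gavg d \<phi> \<gamma> \<theta> zs j" for zs
    unfolding gavg_def by (intro ext) simp
  then have "measure_pmf.expectation (samples P Rw (2 ^ J) s) (\<lambda>p. F (gavg d \<phi> \<gamma> \<theta> (fst p) j)) =
    measure_pmf.expectation (map_pmf (\<lambda>p. take (2 ^ j) (fst p)) (samples P Rw (2 ^ J) s)) (\<lambda>zs. F (gavg d \<phi> \<gamma> \<theta> zs j))"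
    by simp
  also have "\<dots> = measure_pmf.expectation (map_pmf fst (samples P Rw (2 ^ j) s)) (\<lambda>zs. F (gavg d \<phi> \<gamma> \<theta> zs j))"
    using assms by (simp only: map_take_samples power_increasing_iff)
  finally show ?thesis by simp
qed

lemma vnorm_mlmc_combination_power2_le:
  assumes "vnorm d g0 \<le> G"
  shows "(vnorm d (\<lambda>i. g0 i + c * (g i - g' i)))\<^sup>2
         \<le> 2 * G\<^sup>2 + 4 * c\<^sup>2 * ((vnorm d (\<lambda>i. g i - m i))\<^sup>2 + (vnorm d (\<lambda>i. g' i - m i))\<^sup>2)"
proof -
  have "vnorm d (\<lambda>i. g i - g' i) = vnorm d (\<lambda>i. (g i - m i) + (m i - g' i))"
    by (rule vnorm_cong) simp
  then have "(vnorm d (\<lambda>i. g i - g' i))\<^sup>2 = (vnorm d (\<lambda>i. (g i - m i) + (m i - g' i)))\<^sup>2"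
    by simp
  also have "\<dots> \<le> 2 * (vnorm d (\<lambda>i. g i - m i))\<^sup>2 + 2 * (vnorm d (\<lambda>i. g' i - m i))\<^sup>2"
    using vnorm_add_power2_le[of d "\<lambda>i. g i - m i" "\<lambda>i. m i - g' i"] by (simp add: vnorm_minus_commute[of d m])
  finally have "c\<^sup>2 * (vnorm d (\<lambda>i. g i - g' i))\<^sup>2 \<le>
                c\<^sup>2 * (2 * (vnorm d (\<lambda>i. g i - m i))\<^sup>2 + 2 * (vnorm d (\<lambda>i. g' i - m i))\<^sup>2)"
    by (intro mult_left_mono) auto
  moreover have "(vnorm d g0)\<^sup>2 \<le> G\<^sup>2" using assms vnorm_nonneg[of d g0] by (simp add: power_mono)
  moreover have "(vnorm d (\<lambda>i. c * (g i - g' i)))\<^sup>2 = c\<^sup>2 * (vnorm d (\<lambda>i. g i - g' i))\<^sup>2"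
    by (simp add: vnorm_scale power_mult_distrib)
  ultimately show ?thesis
    using vnorm_add_power2_le[of d g0 "\<lambda>i. c * (g i - g' i)"] by (simp add: algebra_simps)
qed

context td_problem
begin

definition Gmax :: "nat \<Rightarrow> real" where
  "Gmax T = (1 + 2 * real T) * G"

text \<open>The conditional expectation of \<open>F g\<^sub>t\<close> given that the chain is in state \<open>s\<close> and the
  iterate is \<open>\<theta>\<close>.\<close>

definition mlmc_expectation :: "nat \<Rightarrow> (nat \<Rightarrow> real) \<Rightarrow> nat \<Rightarrow> ((nat \<Rightarrow> real) \<Rightarrow> real) \<Rightarrow> real" where
  "mlmc_expectation T \<theta> s F = measure_pmf.expectation level_pmf (\<lambda>J.
     measure_pmf.expectation (samples P Rw (2 ^ J) s) (\<lambda>p. F (mlmc_grad T d \<phi> \<gamma> \<theta> (fst p) J)))"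

lemma vnorm_gavg_le:
  assumes "s \<in> S" "p \<in> set_pmf (samples P Rw N s)" "2 ^ j \<le> N" "vnorm d \<theta> \<le> R"
  shows "vnorm d (gavg d \<phi> \<gamma> \<theta> (fst p) j) \<le> G"
proof (rule vnorm_le_if_vinner_le)
  fix b
  have "vinner d b (sgrad d \<phi> \<gamma> \<theta> (fst p ! k)) \<le> vnorm d b * G" if "k < 2 ^ j" for k
  proof -
    have "k < N" using that assms(3) by simp
    then show ?thesis
      using abs_vinner_le_bound[OF order.refl vnorm_sgrad_le[OF assms(4) nth_samples_in_Z[OF assms(1,2)]]]
      by (simp add: abs_le_iff)
  qed
  then have "(1 / 2 ^ j) * (\<Sum>k<2 ^ j. vinner d b (sgrad d \<phi> \<gamma> \<theta> (fst p ! k))) \<le>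
             (1 / 2 ^ j) * (\<Sum>k<(2::nat) ^ j. vnorm d b * G)"
    by (intro mult_left_mono sum_mono) auto
  then show "vinner d b (gavg d \<phi> \<gamma> \<theta> (fst p) j) \<le> vnorm d b * G"
    unfolding gavg_def vinner_scale_right vinner_sum_right by simp
qed (use G_pos in simp)

lemma vnorm_mlmc_grad_le:
  assumes "s \<in> S" "p \<in> set_pmf (samples P Rw (2 ^ J) s)" "vnorm d \<theta> \<le> R"
  shows "vnorm d (mlmc_grad T d \<phi> \<gamma> \<theta> (fst p) J) \<le> Gmax T"
proof -
  let ?g = "gavg d \<phi> \<gamma> \<theta> (fst p)"
  have g: "vnorm d (?g j) \<le> G" if "j \<le> J" for j
    using vnorm_gavg_le[OF assms(1,2) _ assms(3)] that by (simp add: power_increasing)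
  show ?thesis
  proof (cases "2 ^ J \<le> T")
    case True
    have "vnorm d (mlmc_grad T d \<phi> \<gamma> \<theta> (fst p) J) \<le> vnorm d (?g 0) + 2 ^ J * vnorm d (\<lambda>i. ?g J i - ?g (J - 1) i)"
      using True vnorm_triangle[of d "?g 0" "\<lambda>i. 2 ^ J * (?g J i - ?g (J - 1) i)"]
      unfolding mlmc_grad_def by (simp add: vnorm_scale)
    moreover have "vnorm d (\<lambda>i. ?g J i - ?g (J - 1) i) \<le> 2 * G"
      using vnorm_diff_le[of d "?g J" "?g (J - 1)"] g[of J] g[of "J - 1"] by simp
    moreover have "(2::real) ^ J \<le> real T" using True by (metis of_nat_le_iff of_nat_numeral of_nat_power)
    then have "2 ^ J * vnorm d (\<lambda>i. ?g J i - ?g (J - 1) i) \<le> real T * (2 * G)"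
      using calculation(2) by (intro mult_mono) (auto simp: vnorm_nonneg)
    ultimately have "vnorm d (mlmc_grad T d \<phi> \<gamma> \<theta> (fst p) J) \<le> G + real T * (2 * G)"
      using g[of 0] by linarith
    then show ?thesis unfolding Gmax_def by (simp add: algebra_simps)
  next
    case False
    have "G \<le> (1 + 2 * real T) * G" using G_pos by simp
    then show ?thesis using False g[of 0] unfolding mlmc_grad_def Gmax_def by simp
  qed
qed

lemma mlmc_integrable:
  fixes Y :: "(nat \<Rightarrow> real) \<Rightarrow> real"
  assumes "s \<in> S" "vnorm d \<theta> \<le> R" and Y: "\<And>g. vnorm d g \<le> Gmax T \<Longrightarrow> \<bar>Y g\<bar> \<le> B"
  shows "integrable (measure_pmf (samples P Rw (2 ^ J) s)) (\<lambda>p. Y (mlmc_grad T d \<phi> \<gamma> \<theta> (fst p) J))"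
    and "integrable (measure_pmf level_pmf)
           (\<lambda>J. measure_pmf.expectation (samples P Rw (2 ^ J) s) (\<lambda>p. Y (mlmc_grad T d \<phi> \<gamma> \<theta> (fst p) J)))"
proof -
  have bound: "\<bar>Y (mlmc_grad T d \<phi> \<gamma> \<theta> (fst p) J)\<bar> \<le> B" if "p \<in> set_pmf (samples P Rw (2 ^ J) s)" for J p
    by (rule Y[OF vnorm_mlmc_grad_le[OF assms(1) that assms(2)]])
  then show "integrable (measure_pmf (samples P Rw (2 ^ J) s)) (\<lambda>p. Y (mlmc_grad T d \<phi> \<gamma> \<theta> (fst p) J))"
    by (rule integrable_measure_pmf_bounded)
  from bound show "integrable (measure_pmf level_pmf)
           (\<lambda>J. measure_pmf.expectation (samples P Rw (2 ^ J) s) (\<lambda>p. Y (mlmc_grad T d \<phi> \<gamma> \<theta> (fst p) J)))"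
    by (intro integrable_measure_pmf_bounded abs_integral_le_measure_pmf)
qed

lemma mlmc_expectation_const_minus:
  fixes Y :: "(nat \<Rightarrow> real) \<Rightarrow> real"
  assumes "s \<in> S" "vnorm d \<theta> \<le> R" and "\<And>g. vnorm d g \<le> Gmax T \<Longrightarrow> \<bar>Y g\<bar> \<le> B"
  shows "mlmc_expectation T \<theta> s (\<lambda>g. c - Y g) = c - mlmc_expectation T \<theta> s Y"
  using mlmc_integrable[where Y=Y and B=B and T=T, OF assms] unfolding mlmc_expectation_def by (simp add: measure_pmf.prob_space)

lemma integrable_vinner_gavg:
  assumes "s \<in> S" "vnorm d \<theta> \<le> R" "2 ^ j \<le> N"
  shows "integrable (measure_pmf (samples P Rw N s)) (\<lambda>p. vinner d b (gavg d \<phi> \<gamma> \<theta> (fst p) j))"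
  using abs_vinner_le_bound[OF order.refl vnorm_gavg_le[OF assms(1) _ assms(3,2)]]
  by (intro integrable_measure_pmf_bounded) blast

text \<open>The level probability \<open>2 ^ -J\<close> cancels the weight \<open>2 ^ J\<close>, so the corrections telescope.\<close>

lemma mlmc_expectation_vinner:
  assumes s: "s \<in> S" and \<theta>: "vnorm d \<theta> \<le> R" and "0 < T"
  shows "mlmc_expectation T \<theta> s (vinner d b) =
         measure_pmf.expectation (samples P Rw (2 ^ floor_log T) s) (\<lambda>p. vinner d b (gavg d \<phi> \<gamma> \<theta> (fst p) (floor_log T)))"
proof -
  define y where "y j = measure_pmf.expectation (samples P Rw (2 ^ j) s) (\<lambda>p. vinner d b (gavg d \<phi> \<gamma> \<theta> (fst p) j))" for j
  define h where "h J = (if 2 ^ J \<le> T then 2 ^ J * (y J - y (J - 1)) else (0::real))" for J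
  have prefix: "measure_pmf.expectation (samples P Rw (2 ^ J) s) (\<lambda>p. vinner d b (gavg d \<phi> \<gamma> \<theta> (fst p) j)) = y j"
    if "j \<le> J" for j J
    unfolding y_def by (rule integral_gavg_prefix[OF that])
  have int: "integrable (measure_pmf (samples P Rw (2 ^ J) s)) (\<lambda>p. vinner d b (gavg d \<phi> \<gamma> \<theta> (fst p) j))"
    if "j \<le> J" for j J
    using that by (intro integrable_vinner_gavg[OF s \<theta>]) (simp add: power_increasing)
  have level: "measure_pmf.expectation (samples P Rw (2 ^ J) s) (\<lambda>p. vinner d b (mlmc_grad T d \<phi> \<gamma> \<theta> (fst p) J))
               = y 0 + h J" for J
  proof (cases "2 ^ J \<le> T")
    case True
    then show ?thesis
      using int[of 0 J] int[of J J] int[of "J - 1" J] prefix[of 0 J] prefix[of J J] prefix[of "J - 1" J]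
      unfolding mlmc_grad_def h_def by (simp add: vinner_add_right vinner_scale_right vinner_diff_right)
  qed (use prefix[of 0 J] in \<open>simp add: mlmc_grad_def h_def\<close>)
  have h0: "h J = 0" if "1 \<le> J" "J \<notin> {1..floor_log T}" for J
    using that pow2_le_iff_le_floor_log[OF \<open>0 < T\<close>, of J] unfolding h_def by auto
  have "mlmc_expectation T \<theta> s (vinner d b) = y 0 + measure_pmf.expectation level_pmf h"
    unfolding mlmc_expectation_def level using integrable_level_pmf_finite[OF h0] by simp
  also have "measure_pmf.expectation level_pmf h = (\<Sum>J\<in>{1..floor_log T}. (1/2) ^ J * h J)"
    by (rule integral_level_pmf_finite[OF h0])
  also have "\<dots> = (\<Sum>J\<in>{1..floor_log T}. y J - y (J - 1))"
    using pow2_le_iff_le_floor_log[OF \<open>0 < T\<close>] by (intro sum.cong refl) (simp add: h_def power_one_over)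
  also have "\<dots> = y (floor_log T) - y 0"
  proof -
    have "(\<Sum>J\<in>{1..L}. y J - y (J - 1)) = y L - y 0" for L
      by (induction L) (simp_all add: atLeastAtMostSuc_conv)
    then show ?thesis .
  qed
  finally show ?thesis unfolding y_def by simp
qed

lemma mlmc_bias:
  assumes s: "s \<in> S" and \<theta>: "vnorm d \<theta> \<le> R" and "0 < T"
  shows "mlmc_expectation T \<theta> s (\<lambda>g. vinner d a (gbar S P Rw \<mu> d \<phi> \<gamma> \<theta>) - vinner d a g)
         \<le> vnorm d a * (2 * G) * (2 * tau) * 2 / T"
proof -
  let ?L = "floor_log T"
  have "mlmc_expectation T \<theta> s (\<lambda>g. vinner d a (gbar S P Rw \<mu> d \<phi> \<gamma> \<theta>) - vinner d a g) =
        vinner d a (gbar S P Rw \<mu> d \<phi> \<gamma> \<theta>) - mlmc_expectation T \<theta> s (vinner d a)"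
    by (rule mlmc_expectation_const_minus[OF s \<theta> abs_vinner_le_bound[OF order.refl]])
  also have "\<dots> =
        measure_pmf.expectation (samples P Rw (2 ^ ?L) s) (\<lambda>p.
          vinner d (\<lambda>i. - a i) (sample_avg (2 ^ ?L) (sgrad d \<phi> \<gamma> \<theta>) (fst p)) - vinner d (\<lambda>i. - a i) (gbar S P Rw \<mu> d \<phi> \<gamma> \<theta>))"
    using integrable_vinner_gavg[OF s \<theta> order.refl]
    by (simp add: mlmc_expectation_vinner[OF assms] vinner_minus_left gavg_eq_sample_avg measure_pmf.prob_space)
  also have "\<dots> \<le> vnorm d a * (2 * G) * (2 * tau) / 2 ^ ?L"
    using integral_vinner_sample_avg_dev_le[OF vnorm_sgrad_le[OF \<theta>] integral_zstat_vinner_sgrad s,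
        of "2 ^ ?L" "\<lambda>i. - a i"]
    by (simp add: vnorm_minus)
  also have "\<dots> \<le> vnorm d a * (2 * G) * (2 * tau) * 2 / T"
  proof -
    have "real T < real (2 * 2 ^ ?L)" using floor_log_exp2_gt[of T] by (simp only: of_nat_less_iff)
    then have "real T < 2 * 2 ^ ?L" by simp
    then have "1 / 2 ^ ?L \<le> 2 / real T" using \<open>0 < T\<close> by (simp add: field_simps)
    from mult_left_mono[OF this, of "vnorm d a * (2 * G) * (2 * tau)"]
    show ?thesis using G_pos vnorm_nonneg[of d a] by simp
  qed
  finally show ?thesis .
qed

lemma integrable_gavg_dev_power2:
  assumes s: "s \<in> S" and \<theta>: "vnorm d \<theta> \<le> R" and "j \<le> J"
  shows "integrable (measure_pmf (samples P Rw (2 ^ J) s))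
           (\<lambda>p. (vnorm d (\<lambda>l. gavg d \<phi> \<gamma> \<theta> (fst p) j l - gbar S P Rw \<mu> d \<phi> \<gamma> \<theta> l))\<^sup>2)"
proof (rule integrable_measure_pmf_bounded[where B="(G + G)\<^sup>2"])
  fix p assume "p \<in> set_pmf (samples P Rw (2 ^ J) s)"
  moreover have "(2::nat) ^ j \<le> 2 ^ J" using assms(3) by (simp add: power_increasing)
  ultimately have "vnorm d (gavg d \<phi> \<gamma> \<theta> (fst p) j) \<le> G" by (rule vnorm_gavg_le[OF s _ _ \<theta>])
  then have "vnorm d (\<lambda>l. gavg d \<phi> \<gamma> \<theta> (fst p) j l - gbar S P Rw \<mu> d \<phi> \<gamma> \<theta> l) \<le> G + G"
    using vnorm_diff_le[of d "gavg d \<phi> \<gamma> \<theta> (fst p) j" "gbar S P Rw \<mu> d \<phi> \<gamma> \<theta>"] vnorm_gbar_le[OF \<theta>]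
    by linarith
  then show "\<bar>(vnorm d (\<lambda>l. gavg d \<phi> \<gamma> \<theta> (fst p) j l - gbar S P Rw \<mu> d \<phi> \<gamma> \<theta> l))\<^sup>2\<bar> \<le> (G + G)\<^sup>2"
    using vnorm_nonneg by (simp add: power_mono)
qed

lemma integral_gavg_dev_power2_le:
  assumes s: "s \<in> S" and \<theta>: "vnorm d \<theta> \<le> R"
  shows "measure_pmf.expectation (samples P Rw (2 ^ j) s)
           (\<lambda>p. (vnorm d (\<lambda>l. gavg d \<phi> \<gamma> \<theta> (fst p) j l - gbar S P Rw \<mu> d \<phi> \<gamma> \<theta> l))\<^sup>2)
         \<le> 16 * G\<^sup>2 * tau / 2 ^ j"
  using integral_vnorm_sample_avg_dev_le[OF vnorm_sgrad_le[OF \<theta>] integral_zstat_vinner_sgrad s, of "2 ^ j"]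
  by (simp add: gavg_eq_sample_avg)

lemma integral_mlmc_level_power2_le:
  assumes s: "s \<in> S" and \<theta>: "vnorm d \<theta> \<le> R" and "1 \<le> J"
  shows "measure_pmf.expectation (samples P Rw (2 ^ J) s) (\<lambda>p. (vnorm d (mlmc_grad T d \<phi> \<gamma> \<theta> (fst p) J))\<^sup>2)
         \<le> 2 * G\<^sup>2 + (if 2 ^ J \<le> T then 192 * 2 ^ J * G\<^sup>2 * tau else 0)"
proof -
  let ?m = "gbar S P Rw \<mu> d \<phi> \<gamma> \<theta>"
  let ?M = "samples P Rw (2 ^ J) s"
  let ?dev = "\<lambda>j p. (vnorm d (\<lambda>l. gavg d \<phi> \<gamma> \<theta> (fst p) j l - ?m l))\<^sup>2"
  have mlmc_int: "integrable (measure_pmf ?M) (\<lambda>p. (vnorm d (mlmc_grad T d \<phi> \<gamma> \<theta> (fst p) J))\<^sup>2)"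
    using vnorm_mlmc_grad_le[OF s _ \<theta>] vnorm_nonneg
    by (intro integrable_measure_pmf_bounded[where B="(Gmax T)\<^sup>2"]) (simp add: power_mono)
  note dev_int = integrable_gavg_dev_power2[OF s \<theta>] and dev = integral_gavg_dev_power2_le[OF s \<theta>]
  show ?thesis
  proof (cases "2 ^ J \<le> T")
    case True
    have "measure_pmf.expectation ?M (\<lambda>p. (vnorm d (mlmc_grad T d \<phi> \<gamma> \<theta> (fst p) J))\<^sup>2)
          \<le> measure_pmf.expectation ?M (\<lambda>p. 2 * G\<^sup>2 + 4 * (2 ^ J)\<^sup>2 * (?dev J p + ?dev (J - 1) p))"
      using True dev_int[of J] dev_int[of "J - 1"] vnorm_gavg_le[OF s _ _ \<theta>, of _ "2 ^ J" 0]
      by (intro integral_mono_measure_pmf[OF mlmc_int]) (auto simp: mlmc_grad_def intro: vnorm_mlmc_combination_power2_le)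
    also have "\<dots> = 2 * G\<^sup>2 + 4 * (2 ^ J)\<^sup>2 * (measure_pmf.expectation ?M (?dev J)
                   + measure_pmf.expectation (samples P Rw (2 ^ (J - 1)) s) (?dev (J - 1)))"
      using dev_int[of J] dev_int[of "J - 1"]
        integral_gavg_prefix[where j="J - 1" and J=J and F="\<lambda>v. (vnorm d (\<lambda>l. v l - ?m l))\<^sup>2"] by simp
    also have "\<dots> \<le> 2 * G\<^sup>2 + 4 * (2 ^ J)\<^sup>2 * (16 * G\<^sup>2 * tau / 2 ^ J + 16 * G\<^sup>2 * tau / 2 ^ (J - 1))"
      using dev[of J] dev[of "J - 1"] by (intro add_left_mono mult_left_mono add_mono) auto
    also have "\<dots> = 2 * G\<^sup>2 + 192 * 2 ^ J * G\<^sup>2 * tau"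
    proof -
      have "(2::real) ^ J = 2 * 2 ^ (J - 1)" using \<open>1 \<le> J\<close> by (simp add: power_eq_if)
      then show ?thesis by (simp add: power2_eq_square field_simps)
    qed
    finally show ?thesis using True by simp
  next
    case False
    have "(vnorm d (mlmc_grad T d \<phi> \<gamma> \<theta> (fst p) J))\<^sup>2 \<le> 2 * G\<^sup>2" if "p \<in> set_pmf ?M" for p
      using False vnorm_gavg_le[OF s that _ \<theta>, of 0] vnorm_nonneg
      by (simp add: mlmc_grad_def power_mono order_trans[OF _ mult_le_cancel_right1[THEN iffD2]])
    then show ?thesis
      using False mlmc_int by (intro integral_le_measure_pmf[where B="(Gmax T)\<^sup>2"]) (auto simp: power_mono
          vnorm_mlmc_grad_le[OF s _ \<theta>] vnorm_nonneg)
  qed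
qed

lemma mlmc_second_moment:
  assumes s: "s \<in> S" and \<theta>: "vnorm d \<theta> \<le> R" and "0 < T"
  shows "mlmc_expectation T \<theta> s (\<lambda>g. (vnorm d g)\<^sup>2) \<le> 2 * G\<^sup>2 + 192 * G\<^sup>2 * tau * floor_log T"
proof -
  define k where "k J = (if 2 ^ J \<le> T then 192 * 2 ^ J * G\<^sup>2 * tau else (0::real))" for J
  have k0: "k J = 0" if "1 \<le> J" "J \<notin> {1..floor_log T}" for J
    using that pow2_le_iff_le_floor_log[OF \<open>0 < T\<close>, of J] unfolding k_def by auto
  have level_bounded: "\<bar>measure_pmf.expectation (samples P Rw (2 ^ J) s)
                          (\<lambda>p. (vnorm d (mlmc_grad T d \<phi> \<gamma> \<theta> (fst p) J))\<^sup>2)\<bar> \<le> (Gmax T)\<^sup>2" for J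
    using vnorm_mlmc_grad_le[OF s _ \<theta>] vnorm_nonneg
    by (intro abs_integral_le_measure_pmf) (simp add: power_mono)
  have "mlmc_expectation T \<theta> s (\<lambda>g. (vnorm d g)\<^sup>2) \<le> measure_pmf.expectation level_pmf (\<lambda>J. 2 * G\<^sup>2 + k J)"
    unfolding mlmc_expectation_def
  proof (rule integral_mono_measure_pmf)
    show "integrable (measure_pmf level_pmf) (\<lambda>J. 2 * G\<^sup>2 + k J)"
      using integrable_level_pmf_finite[OF k0] by simp
    fix J assume "J \<in> set_pmf level_pmf"
    then show "measure_pmf.expectation (samples P Rw (2 ^ J) s) (\<lambda>p. (vnorm d (mlmc_grad T d \<phi> \<gamma> \<theta> (fst p) J))\<^sup>2)
               \<le> 2 * G\<^sup>2 + k J"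
      unfolding k_def by (rule integral_mlmc_level_power2_le[OF s \<theta> set_level_pmf])
  qed (use level_bounded in \<open>rule integrable_measure_pmf_bounded\<close>)
  also have "\<dots> = 2 * G\<^sup>2 + (\<Sum>J\<in>{1..floor_log T}. (1/2) ^ J * k J)"
    using integrable_level_pmf_finite[OF k0] integral_level_pmf_finite[OF k0] by simp
  also have "(\<Sum>J\<in>{1..floor_log T}. (1/2) ^ J * k J) = (\<Sum>J\<in>{1..floor_log T}. 192 * G\<^sup>2 * tau)"
    using pow2_le_iff_le_floor_log[OF \<open>0 < T\<close>] by (intro sum.cong refl) (simp add: k_def power_one_over)
  finally show ?thesis by (simp add: mult_ac)
qed

end

section \<open>AdaGrad with projection\<close>

text \<open>One step of the AdaGrad potential argument: with \<open>c0 = 2 \<surd>2 R\<close>, the step size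
  \<open>\<eta> = \<surd>2 R / \<surd>Q'\<close> makes \<open>\<eta>\<^sup>2 |g|\<^sup>2\<close> and the growth of the distance term both at most
  \<open>c0 (\<surd>Q' - \<surd>Q) / 2\<close>, where \<open>Q' = Q + |g|\<^sup>2\<close>.\<close>

lemma adagrad_potential_step:
  fixes R c0 Q Q' N2 D D' \<eta> I Reg :: real
  assumes R: "0 < R" and c0: "c0 = 2 * sqrt 2 * R" and Q: "0 \<le> Q" and Q': "Q' = Q + N2" "0 \<le> N2" "0 < Q'"
    and D: "0 \<le> D" "D\<^sup>2 \<le> 4 * R\<^sup>2" and \<eta>: "\<eta> = sqrt 2 * R / sqrt Q'"
    and step: "D'\<^sup>2 \<le> D\<^sup>2 - 2 * \<eta> * I + \<eta>\<^sup>2 * N2"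
    and potential: "Reg + D\<^sup>2 * sqrt Q / c0 \<le> c0 * sqrt Q"
  shows "Reg + I + D'\<^sup>2 * sqrt Q' / c0 \<le> c0 * sqrt Q'"
proof -
  define q where "q = sqrt Q"
  define q' where "q' = sqrt Q'"
  have q: "0 \<le> q" "q * q = Q" unfolding q_def using Q by auto
  have q': "0 < q'" "q' * q' = Q'" unfolding q'_def using Q' by auto
  have "q \<le> q'" unfolding q_def q'_def using Q' by simp
  define r2 where "r2 = sqrt (2::real)"
  have r2: "0 < r2" "r2 * r2 = 2" unfolding r2_def by auto
  have c0': "c0 = 2 * r2 * R" and \<eta>': "\<eta> = r2 * R / q'" unfolding c0 \<eta> r2_def q'_def by simp_all
  have c0_pos: "0 < c0" using c0 R by simp
  define k where "k = q' / c0"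
  have "0 < k" unfolding k_def using q' c0_pos by simp
  have k\<eta>: "2 * \<eta> * k = 1" "k * \<eta>\<^sup>2 = c0 / (4 * q')"
    unfolding k_def \<eta>' c0' using q'(1) R r2(1) by (simp_all add: field_simps power2_eq_square)
  have "I \<le> k * (D\<^sup>2 - D'\<^sup>2) + k * \<eta>\<^sup>2 * N2"
  proof -
    have "k * (2 * \<eta> * I) \<le> k * (D\<^sup>2 - D'\<^sup>2 + \<eta>\<^sup>2 * N2)"
      using step \<open>0 < k\<close> by (intro mult_left_mono) auto
    then show ?thesis using k\<eta>(1) by (simp add: algebra_simps)
  qed
  moreover have "k * \<eta>\<^sup>2 * N2 \<le> c0 / 2 * (q' - q)"
  proof -
    have "N2 = (q' - q) * (q' + q)" using Q' q q' by (simp add: algebra_simps)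
    also have "\<dots> \<le> (q' - q) * (2 * q')" using \<open>q \<le> q'\<close> by (intro mult_left_mono) auto
    finally have "c0 / (4 * q') * N2 \<le> c0 / (4 * q') * ((q' - q) * (2 * q'))"
      using c0_pos q' by (intro mult_left_mono) auto
    also have "\<dots> = c0 / 2 * (q' - q)" using q' by (simp add: field_simps)
    finally show ?thesis using k\<eta>(2) by simp
  qed
  moreover have "D\<^sup>2 * (q' - q) / c0 \<le> c0 / 2 * (q' - q)"
  proof -
    have "D\<^sup>2 * (q' - q) / c0 \<le> 4 * R\<^sup>2 * (q' - q) / c0"
      using D \<open>q \<le> q'\<close> c0_pos by (intro divide_right_mono mult_right_mono) auto
    also have "4 * R\<^sup>2 / c0 = c0 / 2" unfolding c0' using R r2 by (simp add: field_simps power2_eq_square)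
    then have "4 * R\<^sup>2 * (q' - q) / c0 = c0 / 2 * (q' - q)" by (metis times_divide_eq_left mult.commute)
    finally show ?thesis .
  qed
  moreover have "D\<^sup>2 * q / c0 + D\<^sup>2 * (q' - q) / c0 = k * D\<^sup>2" "D'\<^sup>2 * q' / c0 = k * D'\<^sup>2"
    unfolding k_def using c0_pos by (simp_all add: field_simps)
  moreover have "k * (D\<^sup>2 - D'\<^sup>2) = k * D\<^sup>2 - k * D'\<^sup>2" by (simp add: algebra_simps)
  ultimately have "Reg + I + D'\<^sup>2 * q' / c0 \<le> c0 * q + c0 / 2 * (q' - q) + c0 / 2 * (q' - q)"
    using potential unfolding q_def[symmetric] by linarith
  then show ?thesis unfolding q_def q'_def by (simp add: algebra_simps)
qed

text \<open>The analysis runs the algorithm on an extended state that additionally accumulates the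
  regret \<open>\<Sum> \<langle>\<theta>s - \<theta>\<^sub>k, g\<^sub>k\<rangle>\<close>, its mean-path counterpart \<open>\<Sum> \<langle>\<theta>s - \<theta>\<^sub>k, gbar \<theta>\<^sub>k\<rangle>\<close> and
  the errors \<open>\<Sum> errM \<theta>\<^sub>k\<close>; its first component is distributed as \<open>alg_run\<close>.\<close>

type_synonym ext_state = "alg_state \<times> real \<times> real \<times> real"

context td_problem
begin

definition c0 :: real where
  "c0 = 2 * sqrt 2 * R"

definition ext_update :: "nat \<Rightarrow> ext_state \<Rightarrow> nat \<Rightarrow> sample list \<times> nat \<Rightarrow> ext_state" where
  "ext_update T x J p = (case x of ((s, \<theta>, Q, acc), (Reg, A, Es)) \<Rightarrow> (case p of (zs, s_next) \<Rightarrow>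
      let g = mlmc_grad T d \<phi> \<gamma> \<theta> zs J;
          Q' = Q + (vnorm d g)\<^sup>2;
          \<eta> = sqrt 2 * R / sqrt Q'
      in ((s_next, proj d R (\<lambda>i. \<theta> i + \<eta> * g i), Q', (\<lambda>i. acc i + \<theta> i)),
          (Reg + vinner d (\<lambda>i. \<theta>s i - \<theta> i) g,
           A + vinner d (\<lambda>i. \<theta>s i - \<theta> i) (gbar S P Rw \<mu> d \<phi> \<gamma> \<theta>),
           Es + errM S \<mu> d \<phi> \<theta>s \<theta>))))"

definition ext_step :: "nat \<Rightarrow> ext_state \<Rightarrow> ext_state pmf" where
  "ext_step T x = bind_pmf level_pmf (\<lambda>J. map_pmf (ext_update T x J) (samples P Rw (2 ^ J) (fst (fst x))))"

primrec ext_run :: "nat \<Rightarrow> nat pmf \<Rightarrow> (nat \<Rightarrow> real) \<Rightarrow> nat \<Rightarrow> ext_state pmf" where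
  "ext_run T \<xi> \<theta>1 0 = map_pmf (\<lambda>s. ((s, \<theta>1, 0, (\<lambda>i. 0)), (0, 0, 0))) \<xi>"
| "ext_run T \<xi> \<theta>1 (Suc n) = bind_pmf (ext_run T \<xi> \<theta>1 n) (ext_step T)"

lemma map_fst_ext_run: "map_pmf fst (ext_run T \<xi> \<theta>1 n) = alg_run P Rw d \<phi> \<gamma> R T \<xi> \<theta>1 n"
proof (induction n)
  case (Suc n)
  have "map_pmf fst (ext_step T x) = alg_step P Rw d \<phi> \<gamma> R T (fst x)" for x
    unfolding ext_step_def alg_step_def level_pmf_def
    by (cases x) (auto simp: map_bind_pmf map_pmf_comp ext_update_def Let_def split_beta
        intro!: bind_pmf_cong map_pmf_cong)
  then have "map_pmf fst (ext_run T \<xi> \<theta>1 (Suc n)) = bind_pmf (map_pmf fst (ext_run T \<xi> \<theta>1 n)) (alg_step P Rw d \<phi> \<gamma> R T)"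
    by (simp add: map_bind_pmf bind_map_pmf)
  then show ?case using Suc by simp
qed (simp add: map_pmf_comp)

lemma theta_star_in_Kball: "\<theta>s \<in> Kball d R"
  using theta_star_inRd theta_star_norm unfolding Kball_def by simp

lemma vnorm_theta_star_diff_le: "\<theta> \<in> Kball d R \<Longrightarrow> vnorm d (\<lambda>i. \<theta>s i - \<theta> i) \<le> 2 * R"
  using vnorm_diff_le[of d \<theta>s \<theta>] theta_star_norm unfolding Kball_def by simp

lemma regret_potential_update:
  assumes "\<theta> \<in> Kball d R" "0 \<le> Q"
    and potential: "Reg + (vnorm d (\<lambda>i. \<theta> i - \<theta>s i))\<^sup>2 * sqrt Q / c0 \<le> c0 * sqrt Q"
    and Q': "Q' = Q + (vnorm d g)\<^sup>2" and \<theta>': "\<theta>' = proj d R (\<lambda>i. \<theta> i + sqrt 2 * R / sqrt Q' * g i)"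
  shows "Reg + vinner d (\<lambda>i. \<theta>s i - \<theta> i) g + (vnorm d (\<lambda>i. \<theta>' i - \<theta>s i))\<^sup>2 * sqrt Q' / c0 \<le> c0 * sqrt Q'"
proof (cases "Q' = 0")
  case True
  then have "vnorm d g = 0" "Q = 0" using \<open>0 \<le> Q\<close> Q' by (simp_all add: add_nonneg_eq_0_iff)
  then show ?thesis using potential True abs_vinner_le[of d "\<lambda>i. \<theta>s i - \<theta> i" g] by simp
next
  case False
  define \<eta> where "\<eta> = sqrt 2 * R / sqrt Q'"
  define D where "D = vnorm d (\<lambda>i. \<theta> i - \<theta>s i)"
  have "D \<le> 2 * R"
    using vnorm_theta_star_diff_le[OF assms(1)] vnorm_minus_commute[of d \<theta> \<theta>s] unfolding D_def by simp
  then have "D\<^sup>2 \<le> (2 * R)\<^sup>2" unfolding D_def by (rule power_mono[OF _ vnorm_nonneg])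
  then have "D\<^sup>2 \<le> 4 * R\<^sup>2" by (simp add: power_mult_distrib)
  have "vnorm d (\<lambda>i. \<theta>' i - \<theta>s i) \<le> vnorm d (\<lambda>i. (\<theta> i - \<theta>s i) + \<eta> * g i)"
    using proj_nonexpansive[OF R_pos theta_star_in_Kball] unfolding \<theta>' \<eta>_def by (simp add: algebra_simps)
  then have "(vnorm d (\<lambda>i. \<theta>' i - \<theta>s i))\<^sup>2 \<le> (vnorm d (\<lambda>i. (\<theta> i - \<theta>s i) + \<eta> * g i))\<^sup>2"
    using vnorm_nonneg by (simp add: power_mono)
  also have "\<dots> = D\<^sup>2 - 2 * \<eta> * vinner d (\<lambda>i. \<theta>s i - \<theta> i) g + \<eta>\<^sup>2 * (vnorm d g)\<^sup>2"
    unfolding vnorm_add_power2 D_def vinner_scale_right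
    by (simp add: vnorm_scale power_mult_distrib vinner_diff_left vinner_diff_right algebra_simps)
  moreover have "0 \<le> Q'" unfolding Q' using \<open>0 \<le> Q\<close> by simp
  ultimately show ?thesis
    using False vnorm_nonneg[of d] unfolding D_def
    by (intro adagrad_potential_step[OF R_pos c0_def assms(2) Q' _ _ _ \<open>D\<^sup>2 \<le> 4 * R\<^sup>2\<close>[unfolded D_def] \<eta>_def
          _ potential]) auto
qed

lemma errM_running_sum_step:
  assumes "real t * errM S \<mu> d \<phi> \<theta>s (\<lambda>i. acc i / real t) \<le> Es" "t = 0 \<longrightarrow> acc = (\<lambda>i. 0)" "0 \<le> Es"
  shows "real (Suc t) * errM S \<mu> d \<phi> \<theta>s (\<lambda>i. (acc i + \<theta> i) / real (Suc t)) \<le> Es + errM S \<mu> d \<phi> \<theta>s \<theta>"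
proof (cases "t = 0")
  case False
  then have "(real t + 1) * errM S \<mu> d \<phi> \<theta>s (\<lambda>i. (acc i + \<theta> i) / (real t + 1))
             \<le> real t * errM S \<mu> d \<phi> \<theta>s (\<lambda>i. acc i / real t) + errM S \<mu> d \<phi> \<theta>s \<theta>"
    by (intro errM_running_average_le) simp
  then show ?thesis using assms(1) by (simp add: add.commute)
qed (use assms in simp)

definition run_inv :: "nat \<Rightarrow> nat \<Rightarrow> ext_state \<Rightarrow> bool" where
  "run_inv T t x = (case x of ((s, \<theta>, Q, acc), (Reg, A, Es)) \<Rightarrow>
     s \<in> S \<and> \<theta> \<in> Kball d R \<and> 0 \<le> Q \<and> Q \<le> real t * (Gmax T)\<^sup>2 \<and>
     Reg + (vnorm d (\<lambda>i. \<theta> i - \<theta>s i))\<^sup>2 * sqrt Q / c0 \<le> c0 * sqrt Q \<and>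
     \<bar>Reg\<bar> \<le> real t * (2 * R * Gmax T) \<and> \<bar>A\<bar> \<le> real t * (2 * R * G) \<and>
     (1 - \<gamma>) * Es \<le> A \<and> 0 \<le> Es \<and> Es \<le> real t * (4 * R\<^sup>2) \<and>
     real t * errM S \<mu> d \<phi> \<theta>s (\<lambda>i. acc i / real t) \<le> Es \<and> (t = 0 \<longrightarrow> acc = (\<lambda>i. 0)))"

lemma run_inv_step:
  assumes inv: "run_inv T t x" and y: "y \<in> set_pmf (ext_step T x)"
  shows "run_inv T (Suc t) y"
proof -
  obtain s \<theta> Q acc Reg A Es where x: "x = ((s, \<theta>, Q, acc), (Reg, A, Es))" by (metis prod.collapse)
  have s: "s \<in> S" and \<theta>: "\<theta> \<in> Kball d R" and "0 \<le> Q" and Q_le: "Q \<le> real t * (Gmax T)\<^sup>2"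
    and potential: "Reg + (vnorm d (\<lambda>i. \<theta> i - \<theta>s i))\<^sup>2 * sqrt Q / c0 \<le> c0 * sqrt Q"
    and Reg_le: "\<bar>Reg\<bar> \<le> real t * (2 * R * Gmax T)" and A_le: "\<bar>A\<bar> \<le> real t * (2 * R * G)"
    and Es_A: "(1 - \<gamma>) * Es \<le> A" and "0 \<le> Es" and Es_le: "Es \<le> real t * (4 * R\<^sup>2)"
    and avg: "real t * errM S \<mu> d \<phi> \<theta>s (\<lambda>i. acc i / real t) \<le> Es" "t = 0 \<longrightarrow> acc = (\<lambda>i. 0)"
    using inv unfolding run_inv_def x by auto
  have \<theta>_R: "vnorm d \<theta> \<le> R" using \<theta> unfolding Kball_def by simp
  obtain J zs e where p: "(zs, e) \<in> set_pmf (samples P Rw (2 ^ J) s)" and y_update: "y = ext_update T x J (zs, e)"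
    using y unfolding ext_step_def x by auto
  define g where "g = mlmc_grad T d \<phi> \<gamma> \<theta> zs J"
  define Q' where "Q' = Q + (vnorm d g)\<^sup>2"
  define \<theta>' where "\<theta>' = proj d R (\<lambda>i. \<theta> i + sqrt 2 * R / sqrt Q' * g i)"
  define a where "a = (\<lambda>i. \<theta>s i - \<theta> i)"
  define m where "m = gbar S P Rw \<mu> d \<phi> \<gamma> \<theta>"
  have y_eq: "y = ((e, \<theta>', Q', (\<lambda>i. acc i + \<theta> i)), (Reg + vinner d a g, A + vinner d a m, Es + errM S \<mu> d \<phi> \<theta>s \<theta>))"
    unfolding y_update ext_update_def x g_def Q'_def \<theta>'_def a_def m_def by (simp add: Let_def)
  have "vnorm d g \<le> Gmax T" unfolding g_def using vnorm_mlmc_grad_le[OF s _ \<theta>_R] p by fastforce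
  then have "(vnorm d g)\<^sup>2 \<le> (Gmax T)\<^sup>2" using vnorm_nonneg by (simp add: power_mono)
  have "\<bar>vinner d a g\<bar> \<le> 2 * R * Gmax T"
    unfolding a_def by (rule abs_vinner_le_bound[OF vnorm_theta_star_diff_le[OF \<theta>] \<open>vnorm d g \<le> Gmax T\<close>])
  moreover have "\<bar>vinner d a m\<bar> \<le> 2 * R * G"
    unfolding a_def m_def by (rule abs_vinner_le_bound[OF vnorm_theta_star_diff_le[OF \<theta>] vnorm_gbar_le[OF \<theta>_R]])
  moreover have "(1 - \<gamma>) * errM S \<mu> d \<phi> \<theta>s \<theta> \<le> vinner d a m"
    unfolding a_def m_def by (rule td_monotone)
  moreover have "Reg + vinner d a g + (vnorm d (\<lambda>i. \<theta>' i - \<theta>s i))\<^sup>2 * sqrt Q' / c0 \<le> c0 * sqrt Q'"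
    unfolding a_def by (rule regret_potential_update[OF \<theta> \<open>0 \<le> Q\<close> potential Q'_def \<theta>'_def])
  moreover have "e \<in> S" using set_samples[OF P_closed s p] by simp
  moreover note errM_le[OF \<theta>_R] errM_nonneg errM_running_sum_step[OF avg \<open>0 \<le> Es\<close>]
  ultimately show ?thesis
    unfolding y_eq run_inv_def prod.case
    using proj_in_Kball[OF R_pos] \<open>0 \<le> Q\<close> Q_le \<open>(vnorm d g)\<^sup>2 \<le> (Gmax T)\<^sup>2\<close> Reg_le A_le Es_A \<open>0 \<le> Es\<close> Es_le
    by (simp add: Q'_def \<theta>'_def algebra_simps add_nonneg_nonneg abs_le_iff)
qed

definition ext_sumsq :: "ext_state \<Rightarrow> real" where
  "ext_sumsq x = fst (snd (snd (fst x)))"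

definition ext_gap :: "ext_state \<Rightarrow> real" where
  "ext_gap x = fst (snd (snd x)) - fst (snd x)"

lemma integral_ext_step_increment:
  fixes Y :: "(nat \<Rightarrow> real) \<Rightarrow> real"
  assumes x: "x = ((s, \<theta>, Q, acc), e)" and s: "s \<in> S" and \<theta>: "vnorm d \<theta> \<le> R"
    and F: "\<And>J p. F (ext_update T x J p) = F x + Y (mlmc_grad T d \<phi> \<gamma> \<theta> (fst p) J)"
    and Y: "\<And>g. vnorm d g \<le> Gmax T \<Longrightarrow> \<bar>Y g\<bar> \<le> B"
  shows "measure_pmf.expectation (ext_step T x) F = F x + mlmc_expectation T \<theta> s Y"
proof -
  have "fst (fst x) = s" using x by simp
  then have "measure_pmf.expectation (ext_step T x) F =
        measure_pmf.expectation level_pmf (\<lambda>J. measure_pmf.expectation (map_pmf (ext_update T x J) (samples P Rw (2 ^ J) s)) F)"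
    unfolding ext_step_def
  proof (subst integral_bind_pmf_bounded[where B="\<bar>F x\<bar> + B"])
    fix y assume "y \<in> set_pmf (bind_pmf level_pmf (\<lambda>J. map_pmf (ext_update T x J) (samples P Rw (2 ^ J) (fst (fst x)))))"
    then obtain J p where p: "p \<in> set_pmf (samples P Rw (2 ^ J) s)" and "y = ext_update T x J p" using x by auto
    then have "F y = F x + Y (mlmc_grad T d \<phi> \<gamma> \<theta> (fst p) J)" using F by simp
    then show "\<bar>F y\<bar> \<le> \<bar>F x\<bar> + B"
      using Y[OF vnorm_mlmc_grad_le[OF s p \<theta>]] abs_triangle_ineq[of "F x" "Y (mlmc_grad T d \<phi> \<gamma> \<theta> (fst p) J)"]
      by linarith
  qed simp_all
  also have "\<dots> = F x + mlmc_expectation T \<theta> s Y"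
    using mlmc_integrable[where Y=Y, OF s \<theta> Y] unfolding mlmc_expectation_def
    by (simp add: F measure_pmf.prob_space)
  finally show ?thesis .
qed

lemma integral_ext_run_le_linear:
  fixes F :: "ext_state \<Rightarrow> real"
  assumes init: "\<And>x. x \<in> set_pmf (ext_run T \<xi> \<theta>1 0) \<Longrightarrow> F x = 0"
    and bounded: "\<And>n x. x \<in> set_pmf (ext_run T \<xi> \<theta>1 n) \<Longrightarrow> \<bar>F x\<bar> \<le> B n"
    and step: "\<And>n x. x \<in> set_pmf (ext_run T \<xi> \<theta>1 n) \<Longrightarrow> measure_pmf.expectation (ext_step T x) F \<le> F x + c"
  shows "measure_pmf.expectation (ext_run T \<xi> \<theta>1 n) F \<le> real n * c"
proof (induction n)
  case 0
  then show ?case using init by (simp add: integral_cong_measure_pmf[where g="\<lambda>_. 0"])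
next
  case (Suc n)
  have F_int: "integrable (measure_pmf (ext_run T \<xi> \<theta>1 n)) F"
    using bounded by (rule integrable_measure_pmf_bounded)
  have "measure_pmf.expectation (ext_run T \<xi> \<theta>1 (Suc n)) F =
        measure_pmf.expectation (ext_run T \<xi> \<theta>1 n) (\<lambda>x. measure_pmf.expectation (ext_step T x) F)"
    unfolding ext_run.simps by (rule integral_bind_pmf_bounded[OF bounded[of _ "Suc n", unfolded ext_run.simps]])
  also have "\<dots> \<le> measure_pmf.expectation (ext_run T \<xi> \<theta>1 n) (\<lambda>x. F x + c)"
  proof (rule integral_mono_measure_pmf)
    have "\<bar>measure_pmf.expectation (ext_step T x) F\<bar> \<le> B (Suc n)" if "x \<in> set_pmf (ext_run T \<xi> \<theta>1 n)" for x
      using that bounded[of _ "Suc n"] by (intro abs_integral_le_measure_pmf) force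
    then show "integrable (measure_pmf (ext_run T \<xi> \<theta>1 n)) (\<lambda>x. measure_pmf.expectation (ext_step T x) F)"
      by (rule integrable_measure_pmf_bounded)
  qed (use F_int step in simp_all)
  also have "\<dots> \<le> real n * c + c" using Suc F_int by (simp add: measure_pmf.prob_space)
  finally show ?case by (simp add: algebra_simps)
qed

lemma run_inv_ext_sumsq: "run_inv T t x \<Longrightarrow> 0 \<le> ext_sumsq x \<and> ext_sumsq x \<le> real t * (Gmax T)\<^sup>2"
  unfolding run_inv_def ext_sumsq_def by (cases x) auto

lemma run_inv_ext_gap: "run_inv T t x \<Longrightarrow> \<bar>ext_gap x\<bar> \<le> real t * (2 * R * G) + real t * (2 * R * Gmax T)"
  unfolding run_inv_def ext_gap_def by (cases x) auto

context
  fixes T :: nat and \<xi> :: "nat pmf" and \<theta>1 :: "nat \<Rightarrow> real"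
  assumes T_pos: "0 < T" and set_\<xi>: "set_pmf \<xi> \<subseteq> S" and \<theta>1: "\<theta>1 \<in> Kball d R"
begin

lemma run_inv_ext_run: "x \<in> set_pmf (ext_run T \<xi> \<theta>1 n) \<Longrightarrow> run_inv T n x"
proof (induction n arbitrary: x)
  case 0
  then show ?case using set_\<xi> \<theta>1 unfolding run_inv_def by auto
next
  case (Suc n)
  then obtain x0 where "x0 \<in> set_pmf (ext_run T \<xi> \<theta>1 n)" "x \<in> set_pmf (ext_step T x0)" by auto
  then show ?case using Suc.IH run_inv_step by blast
qed

lemma integral_ext_step_gap:
  assumes "x \<in> set_pmf (ext_run T \<xi> \<theta>1 n)"
  shows "measure_pmf.expectation (ext_step T x) ext_gap \<le> ext_gap x + 2 * R * (2 * G) * (2 * tau) * 2 / T"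
proof -
  obtain s \<theta> Q acc Reg A Es where x: "x = ((s, \<theta>, Q, acc), (Reg, A, Es))" by (metis prod.collapse)
  have s: "s \<in> S" and \<theta>: "\<theta> \<in> Kball d R" using run_inv_ext_run[OF assms] unfolding run_inv_def x by auto
  then have \<theta>_R: "vnorm d \<theta> \<le> R" unfolding Kball_def by simp
  define a where "a = (\<lambda>i. \<theta>s i - \<theta> i)"
  have "measure_pmf.expectation (ext_step T x) ext_gap =
        ext_gap x + mlmc_expectation T \<theta> s (\<lambda>g. vinner d a (gbar S P Rw \<mu> d \<phi> \<gamma> \<theta>) - vinner d a g)"
  proof (rule integral_ext_step_increment[OF x s \<theta>_R])
    show "ext_gap (ext_update T x J p) =
          ext_gap x + (vinner d a (gbar S P Rw \<mu> d \<phi> \<gamma> \<theta>) - vinner d a (mlmc_grad T d \<phi> \<gamma> \<theta> (fst p) J))" for J p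
      unfolding x ext_gap_def ext_update_def a_def by (simp add: Let_def split_beta)
    show "\<bar>vinner d a (gbar S P Rw \<mu> d \<phi> \<gamma> \<theta>) - vinner d a g\<bar> \<le> 2 * R * G + 2 * R * Gmax T"
      if "vnorm d g \<le> Gmax T" for g
      using abs_vinner_le_bound[OF vnorm_theta_star_diff_le[OF \<theta>] vnorm_gbar_le[OF \<theta>_R]]
        abs_vinner_le_bound[OF vnorm_theta_star_diff_le[OF \<theta>] that] unfolding a_def by linarith
  qed
  also have "\<dots> \<le> ext_gap x + vnorm d a * (2 * G) * (2 * tau) * 2 / T"
    using mlmc_bias[OF s \<theta>_R T_pos] by simp
  also have "\<dots> \<le> ext_gap x + 2 * R * (2 * G) * (2 * tau) * 2 / T"
    using vnorm_theta_star_diff_le[OF \<theta>] G_pos unfolding a_def by (intro add_left_mono divide_right_mono mult_right_mono) auto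
  finally show ?thesis .
qed

lemma integral_ext_step_sumsq:
  assumes "x \<in> set_pmf (ext_run T \<xi> \<theta>1 n)"
  shows "measure_pmf.expectation (ext_step T x) ext_sumsq \<le> ext_sumsq x + (2 * G\<^sup>2 + 192 * G\<^sup>2 * tau * floor_log T)"
proof -
  obtain s \<theta> Q acc Reg A Es where x: "x = ((s, \<theta>, Q, acc), (Reg, A, Es))" by (metis prod.collapse)
  have s: "s \<in> S" and \<theta>: "\<theta> \<in> Kball d R" using run_inv_ext_run[OF assms] unfolding run_inv_def x by auto
  then have \<theta>_R: "vnorm d \<theta> \<le> R" unfolding Kball_def by simp
  have "measure_pmf.expectation (ext_step T x) ext_sumsq = ext_sumsq x + mlmc_expectation T \<theta> s (\<lambda>g. (vnorm d g)\<^sup>2)"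
  proof (rule integral_ext_step_increment[OF x s \<theta>_R])
    show "ext_sumsq (ext_update T x J p) = ext_sumsq x + (vnorm d (mlmc_grad T d \<phi> \<gamma> \<theta> (fst p) J))\<^sup>2" for J p
      unfolding x ext_sumsq_def ext_update_def by (simp add: Let_def split_beta)
    show "\<bar>(vnorm d g)\<^sup>2\<bar> \<le> (Gmax T)\<^sup>2" if "vnorm d g \<le> Gmax T" for g
      using that vnorm_nonneg by (simp add: power_mono)
  qed
  then show ?thesis using mlmc_second_moment[OF s \<theta>_R T_pos] by simp
qed

lemma integral_ext_run_gap:
  "measure_pmf.expectation (ext_run T \<xi> \<theta>1 n) ext_gap \<le> real n * (2 * R * (2 * G) * (2 * tau) * 2 / T)"
  using run_inv_ext_gap[OF run_inv_ext_run] integral_ext_step_gap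
  by (intro integral_ext_run_le_linear[where B="\<lambda>n. real n * (2 * R * G) + real n * (2 * R * Gmax T)"])
     (auto simp: ext_gap_def)

lemma integral_ext_run_sumsq:
  "measure_pmf.expectation (ext_run T \<xi> \<theta>1 n) ext_sumsq \<le> real n * (2 * G\<^sup>2 + 192 * G\<^sup>2 * tau * floor_log T)"
  using run_inv_ext_sumsq[OF run_inv_ext_run] integral_ext_step_sumsq
  by (intro integral_ext_run_le_linear[where B="\<lambda>n. real n * (Gmax T)\<^sup>2"]) (auto simp: ext_sumsq_def)

lemma integral_avg_iterate_errM:
  "measure_pmf.expectation (avg_iterate P Rw d \<phi> \<gamma> R T \<xi> \<theta>1) (errM S \<mu> d \<phi> \<theta>s) =
   measure_pmf.expectation (ext_run T \<xi> \<theta>1 T) (\<lambda>x. errM S \<mu> d \<phi> \<theta>s (\<lambda>i. snd (snd (snd (fst x))) i / real T))"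
  unfolding avg_iterate_def map_fst_ext_run[symmetric] by (simp add: split_beta)

lemma ext_run_avg_errM_le:
  assumes "x \<in> set_pmf (ext_run T \<xi> \<theta>1 T)"
  defines "e \<equiv> errM S \<mu> d \<phi> \<theta>s (\<lambda>i. snd (snd (snd (fst x))) i / real T)"
  shows "e \<le> 4 * R\<^sup>2" and "real T * (1 - \<gamma>) * e \<le> ext_gap x + c0 * sqrt (ext_sumsq x)"
proof -
  obtain s \<theta> Q acc Reg A Es where x: "x = ((s, \<theta>, Q, acc), (Reg, A, Es))" by (metis prod.collapse)
  have potential: "Reg + (vnorm d (\<lambda>i. \<theta> i - \<theta>s i))\<^sup>2 * sqrt Q / c0 \<le> c0 * sqrt Q"
    and "(1 - \<gamma>) * Es \<le> A" "Es \<le> real T * (4 * R\<^sup>2)" "real T * e \<le> Es" "0 \<le> Q"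
    using run_inv_ext_run[OF assms(1)] unfolding run_inv_def x e_def by auto
  have "real T * e \<le> real T * (4 * R\<^sup>2)" using \<open>real T * e \<le> Es\<close> \<open>Es \<le> real T * (4 * R\<^sup>2)\<close> by linarith
  then show "e \<le> 4 * R\<^sup>2" using T_pos by simp
  have "0 \<le> (vnorm d (\<lambda>i. \<theta> i - \<theta>s i))\<^sup>2 * sqrt Q / c0" using \<open>0 \<le> Q\<close> R_pos by (simp add: c0_def)
  then have "Reg \<le> c0 * sqrt Q" using potential by linarith
  moreover have "real T * (1 - \<gamma>) * e \<le> (1 - \<gamma>) * Es"
    using \<open>real T * e \<le> Es\<close> gamma mult_left_mono[of "real T * e" Es "1 - \<gamma>"] by (simp add: mult_ac)
  ultimately show "real T * (1 - \<gamma>) * e \<le> ext_gap x + c0 * sqrt (ext_sumsq x)"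
    using \<open>(1 - \<gamma>) * Es \<le> A\<close> unfolding x ext_gap_def ext_sumsq_def by simp
qed

lemma expected_avg_errM_le_4R2:
  "measure_pmf.expectation (avg_iterate P Rw d \<phi> \<gamma> R T \<xi> \<theta>1) (errM S \<mu> d \<phi> \<theta>s) \<le> 4 * R\<^sup>2"
  unfolding integral_avg_iterate_errM
  using ext_run_avg_errM_le(1) errM_nonneg
  by (intro integral_le_measure_pmf[where B="4 * R\<^sup>2"]) (auto simp: abs_le_iff intro: order_trans[OF _ zero_le_power2])

lemma expected_avg_errM_le_regret:
  "measure_pmf.expectation (avg_iterate P Rw d \<phi> \<gamma> R T \<xi> \<theta>1) (errM S \<mu> d \<phi> \<theta>s) \<le>
     (real T * (2 * R * (2 * G) * (2 * real tau) * 2 / T)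
       + c0 * sqrt (real T * (2 * G\<^sup>2 + 192 * G\<^sup>2 * tau * floor_log T))) / (real T * (1 - \<gamma>))"
proof -
  let ?M = "ext_run T \<xi> \<theta>1 T"
  let ?e = "\<lambda>x. errM S \<mu> d \<phi> \<theta>s (\<lambda>i. snd (snd (snd (fst x))) i / real T)"
  have "0 < real T * (1 - \<gamma>)" using T_pos gamma by simp
  have sumsq: "0 \<le> ext_sumsq x" "ext_sumsq x \<le> real T * (Gmax T)\<^sup>2" if "x \<in> set_pmf ?M" for x
    using run_inv_ext_sumsq[OF run_inv_ext_run[OF that]] by auto
  have gap_int: "integrable (measure_pmf ?M) ext_gap"
    using run_inv_ext_gap[OF run_inv_ext_run] by (rule integrable_measure_pmf_bounded)
  have sqrt_int: "integrable (measure_pmf ?M) (\<lambda>x. sqrt (ext_sumsq x))"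
    using sumsq by (intro integrable_measure_pmf_bounded[where B="sqrt (real T * (Gmax T)\<^sup>2)"]) simp
  have "measure_pmf.expectation ?M ?e \<le>
        measure_pmf.expectation ?M (\<lambda>x. (ext_gap x + c0 * sqrt (ext_sumsq x)) / (real T * (1 - \<gamma>)))"
  proof (rule integral_mono_measure_pmf)
    show "integrable (measure_pmf ?M) ?e"
      using ext_run_avg_errM_le(1) errM_nonneg by (intro integrable_measure_pmf_bounded[where B="4 * R\<^sup>2"]) auto
    fix x assume "x \<in> set_pmf ?M"
    then show "?e x \<le> (ext_gap x + c0 * sqrt (ext_sumsq x)) / (real T * (1 - \<gamma>))"
      using ext_run_avg_errM_le(2) \<open>0 < real T * (1 - \<gamma>)\<close> by (simp add: field_simps mult_ac)
  qed (use gap_int sqrt_int in simp)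
  also have "\<dots> = (measure_pmf.expectation ?M ext_gap + c0 * measure_pmf.expectation ?M (\<lambda>x. sqrt (ext_sumsq x)))
                  / (real T * (1 - \<gamma>))"
    using gap_int sqrt_int by simp
  also have "\<dots> \<le> (real T * (2 * R * (2 * G) * (2 * real tau) * 2 / T)
       + c0 * sqrt (real T * (2 * G\<^sup>2 + 192 * G\<^sup>2 * tau * floor_log T))) / (real T * (1 - \<gamma>))"
  proof (intro divide_right_mono add_mono mult_left_mono)
    have "measure_pmf.expectation ?M (\<lambda>x. sqrt (ext_sumsq x)) \<le> sqrt (measure_pmf.expectation ?M ext_sumsq)"
      using sumsq by (rule integral_sqrt_le_sqrt_integral)
    then show "measure_pmf.expectation ?M (\<lambda>x. sqrt (ext_sumsq x)) \<le>
               sqrt (real T * (2 * G\<^sup>2 + 192 * G\<^sup>2 * tau * floor_log T))"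
      using integral_ext_run_sumsq[of T] order_trans real_sqrt_le_mono by blast
  qed (use integral_ext_run_gap[of T] R_pos \<open>0 < real T * (1 - \<gamma>)\<close> in \<open>simp_all add: c0_def\<close>)
  finally show ?thesis unfolding integral_avg_iterate_errM .
qed

end

end

lemma rate_short_horizon:
  fixes R G \<gamma> T \<tau> \<omega> :: real
  assumes R: "0 < R" and G: "2 * R \<le> G" and \<gamma>: "0 \<le> \<gamma>" "\<gamma> < 1" and T: "1 \<le> T" "T < \<tau>" and \<omega>: "1 \<le> \<omega>"
  shows "4 * R\<^sup>2 \<le> 100 * \<omega> * (G * R * sqrt \<tau> / ((1 - \<gamma>) * sqrt T))"
proof -
  define K where "K = G * R * sqrt \<tau> / ((1 - \<gamma>) * sqrt T)"
  have "1 \<le> sqrt \<tau> / sqrt T" "1 \<le> 1 / (1 - \<gamma>)" using T \<gamma> by simp_all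
  then have "G * R * 1 * 1 \<le> G * R * (sqrt \<tau> / sqrt T) * (1 / (1 - \<gamma>))"
    using R G T by (intro mult_mono) auto
  then have "G * R \<le> K" unfolding K_def by (simp add: field_simps)
  have "4 * R\<^sup>2 \<le> 2 * (G * R)" using G R by (simp add: power2_eq_square)
  moreover have "0 \<le> K" using \<open>G * R \<le> K\<close> G R mult_pos_pos[OF _ R, of G] by linarith
  ultimately have "4 * R\<^sup>2 \<le> 100 * K" using \<open>G * R \<le> K\<close> by linarith
  also have "\<dots> \<le> 100 * \<omega> * K" using mult_right_mono[OF \<omega> \<open>0 \<le> K\<close>] by simp
  finally show ?thesis unfolding K_def .
qed

lemma sqrt_second_moment_bound_le:
  fixes G \<tau> L \<omega> :: real
  assumes "0 \<le> G" "1 \<le> \<tau>" "0 \<le> L" "L \<le> 2 * \<omega>" "1 \<le> \<omega>"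
  shows "sqrt (2 * G\<^sup>2 + 192 * G\<^sup>2 * \<tau> * L) \<le> 20 * G * sqrt \<tau> * \<omega>"
proof -
  define X where "X = G\<^sup>2 * (\<tau> * \<omega>\<^sup>2)"
  have "\<omega> \<le> \<omega>\<^sup>2" using assms(5) by (simp add: power2_eq_square)
  then have "1 \<le> \<omega>\<^sup>2" using assms(5) by linarith
  then have "1 \<le> \<tau> * \<omega>\<^sup>2" using mult_mono[OF assms(2) \<open>1 \<le> \<omega>\<^sup>2\<close>] assms(2) by simp
  then have "G\<^sup>2 * 1 \<le> X" unfolding X_def by (intro mult_left_mono) auto
  then have "G\<^sup>2 \<le> X" by simp
  moreover have "192 * G\<^sup>2 * \<tau> * L \<le> 192 * G\<^sup>2 * \<tau> * (2 * \<omega>\<^sup>2)"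
    using assms \<open>\<omega> \<le> \<omega>\<^sup>2\<close> by (intro mult_left_mono) auto
  moreover have "192 * G\<^sup>2 * \<tau> * (2 * \<omega>\<^sup>2) = 384 * X" unfolding X_def by (simp add: ac_simps)
  moreover have "0 \<le> X" unfolding X_def using assms(2) by simp
  ultimately have "2 * G\<^sup>2 + 192 * G\<^sup>2 * \<tau> * L \<le> 400 * X" by linarith
  then have "sqrt (2 * G\<^sup>2 + 192 * G\<^sup>2 * \<tau> * L) \<le> sqrt (400 * X)" by simp
  also have "\<dots> = 20 * G * sqrt \<tau> * \<omega>" unfolding X_def using assms by (simp add: real_sqrt_mult)
  finally show ?thesis .
qed

lemma rate_long_horizon:
  fixes R G \<gamma> T \<tau> L \<omega> c0 V \<beta> :: real
  assumes R: "0 < R" and G: "2 * R \<le> G" and \<gamma>: "0 \<le> \<gamma>" "\<gamma> < 1" and T: "1 \<le> T" and \<tau>: "1 \<le> \<tau>" "\<tau> \<le> T"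
    and L: "0 \<le> L" "L \<le> 2 * \<omega>" and \<omega>: "1 \<le> \<omega>"
    and c0: "c0 = 2 * sqrt 2 * R" and V: "V = 2 * G\<^sup>2 + 192 * G\<^sup>2 * \<tau> * L"
    and \<beta>: "\<beta> = 2 * R * (2 * G) * (2 * \<tau>) * 2 / T"
  shows "(T * \<beta> + c0 * sqrt (T * V)) / (T * (1 - \<gamma>)) \<le> 100 * \<omega> * (G * R * sqrt \<tau> / ((1 - \<gamma>) * sqrt T))"
proof -
  define K where "K = G * R * sqrt \<tau> / ((1 - \<gamma>) * sqrt T)"
  have "0 < G" "0 < 1 - \<gamma>" "0 < sqrt T" "1 \<le> sqrt \<tau>" using R G \<gamma> T \<tau> by auto
  have "0 < K" unfolding K_def using \<open>0 < G\<close> R \<open>0 < 1 - \<gamma>\<close> \<open>0 < sqrt T\<close> \<open>1 \<le> sqrt \<tau>\<close> by simp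
  have "\<tau> / T \<le> sqrt \<tau> / sqrt T"
  proof -
    have "sqrt \<tau> / sqrt T \<le> 1" "0 \<le> sqrt \<tau> / sqrt T" using \<tau> T by simp_all
    then have "(sqrt \<tau> / sqrt T)\<^sup>2 \<le> sqrt \<tau> / sqrt T * 1" unfolding power2_eq_square by (intro mult_left_mono)
    then show ?thesis using \<tau> T by (simp add: power_divide)
  qed
  have bias: "\<beta> / (1 - \<gamma>) \<le> 16 * K"
  proof -
    have "\<beta> / (1 - \<gamma>) = 16 * (G * R) * (\<tau> / T) / (1 - \<gamma>)" unfolding \<beta> by (simp add: field_simps)
    also have "\<dots> \<le> 16 * (G * R) * (sqrt \<tau> / sqrt T) / (1 - \<gamma>)"
      using \<open>\<tau> / T \<le> sqrt \<tau> / sqrt T\<close> \<open>0 < G\<close> R \<open>0 < 1 - \<gamma>\<close> by (intro divide_right_mono mult_left_mono) auto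
    also have "\<dots> = 16 * K" unfolding K_def by (simp add: field_simps)
    finally show ?thesis .
  qed
  have "sqrt V \<le> 20 * G * sqrt \<tau> * \<omega>"
    unfolding V using \<open>0 < G\<close> \<tau>(1) L \<omega> by (intro sqrt_second_moment_bound_le) auto
  have "sqrt 2 \<le> (3/2::real)" by (rule real_le_lsqrt) (auto simp: power2_eq_square)
  then have "c0 \<le> 3 * R" unfolding c0 using R by simp
  have noise: "c0 * sqrt (T * V) / (T * (1 - \<gamma>)) \<le> 60 * \<omega> * K"
  proof -
    have T_sqrt: "T * (1 - \<gamma>) = sqrt T * (sqrt T * (1 - \<gamma>))" using T by (simp add: mult.assoc[symmetric])
    have "c0 * sqrt (T * V) / (T * (1 - \<gamma>)) = (sqrt T * (c0 * sqrt V)) / (sqrt T * (sqrt T * (1 - \<gamma>)))"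
      unfolding real_sqrt_mult by (subst T_sqrt) (simp only: mult_ac)
    also have "\<dots> = c0 * sqrt V / (sqrt T * (1 - \<gamma>))"
      using \<open>0 < sqrt T\<close> by (rule mult_divide_mult_cancel_left[OF less_imp_neq[symmetric]])
    also have "\<dots> \<le> (3 * R) * (20 * G * sqrt \<tau> * \<omega>) / (sqrt T * (1 - \<gamma>))"
      using \<open>c0 \<le> 3 * R\<close> \<open>sqrt V \<le> 20 * G * sqrt \<tau> * \<omega>\<close> \<open>0 < 1 - \<gamma>\<close> \<open>0 < sqrt T\<close> R c0 L \<tau>
      unfolding V by (intro divide_right_mono mult_mono) auto
    also have "\<dots> = 60 * \<omega> * K" unfolding K_def by (simp add: field_simps)
    finally show ?thesis .
  qed
  have "(T * \<beta> + c0 * sqrt (T * V)) / (T * (1 - \<gamma>)) = \<beta> / (1 - \<gamma>) + c0 * sqrt (T * V) / (T * (1 - \<gamma>))"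
    using T by (simp add: add_divide_distrib)
  also have "\<dots> \<le> 16 * K + 60 * \<omega> * K" using bias noise by simp
  also have "\<dots> \<le> 100 * \<omega> * K" using \<omega> \<open>0 < K\<close> by (simp add: algebra_simps)
  finally show ?thesis unfolding K_def .
qed

lemma (in td_problem) expected_error_rate:
  assumes "0 < T" "set_pmf \<xi> \<subseteq> S" "\<theta>1 \<in> Kball d R"
  shows "measure_pmf.expectation (avg_iterate P Rw d \<phi> \<gamma> R T \<xi> \<theta>1) (errM S \<mu> d \<phi> \<theta>s)
         \<le> 100 * (1 + ln (real T) + ln (real tau)) * (G * R * sqrt tau / ((1 - \<gamma>) * sqrt T))"
proof -
  have "1 \<le> real T" "1 \<le> real tau" using assms(1) tau_mix_pos by simp_all
  then have \<omega>: "1 \<le> 1 + ln (real T) + ln (real tau)" by simp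
  have "2 * R \<le> G" using rmax_nonneg by simp
  consider "real T < real tau" | "real tau \<le> real T" by linarith
  then show ?thesis
  proof cases
    case 1
    show ?thesis
      by (rule order_trans[OF expected_avg_errM_le_4R2[OF assms]
            rate_short_horizon[OF R_pos \<open>2 * R \<le> G\<close> gamma \<open>1 \<le> real T\<close> 1 \<omega>]])
  next
    case 2
    have "real (floor_log T) \<le> 2 * (1 + ln (real T) + ln (real tau))"
      using floor_log_le_ln[OF assms(1)] ln_ge_zero[OF \<open>1 \<le> real tau\<close>] by simp
    then show ?thesis
      by (intro order_trans[OF expected_avg_errM_le_regret[OF assms] rate_long_horizon[OF R_pos \<open>2 * R \<le> G\<close>
            gamma \<open>1 \<le> real T\<close> \<open>1 \<le> real tau\<close> 2 _ _ \<omega> c0_def refl refl]]) simp_all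
  qed
qed

theorem theorem5p2:
  shows "\<exists>(c::real) (k::nat). \<forall>S P Rw rmax \<gamma> \<mu> d \<phi> R \<theta>s (\<xi>::nat pmf) \<theta>1 (T::nat).
     td_setting S P Rw rmax \<gamma> \<mu> d \<phi> R \<theta>s \<and> set_pmf \<xi> \<subseteq> S \<and> \<theta>1 \<in> Kball d R \<and> 1 \<le> T \<longrightarrow>
     measure_pmf.expectation (avg_iterate P Rw d \<phi> \<gamma> R T \<xi> \<theta>1) (\<lambda>\<theta>. errM S \<mu> d \<phi> \<theta>s \<theta>)
       \<le> c * (1 + ln (real T) + ln (real (tau_mix S P Rw \<mu>))) ^ k *
          ((rmax + 2 * R) * R * sqrt (real (tau_mix S P Rw \<mu>)) / ((1 - \<gamma>) * sqrt (real T)))"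
proof (intro exI[of _ "100::real"] exI[of _ "1::nat"] allI impI)
  fix S P Rw rmax \<gamma> \<mu> d \<phi> R \<theta>s and \<xi> :: "nat pmf" and \<theta>1 and T :: nat
  assume H: "td_setting S P Rw rmax \<gamma> \<mu> d \<phi> R \<theta>s \<and> set_pmf \<xi> \<subseteq> S \<and> \<theta>1 \<in> Kball d R \<and> 1 \<le> T"
  then interpret td_problem S P Rw rmax \<gamma> \<mu> d \<phi> R \<theta>s by unfold_locales simp
  from H have "0 < T" "set_pmf \<xi> \<subseteq> S" "\<theta>1 \<in> Kball d R" by auto
  show "measure_pmf.expectation (avg_iterate P Rw d \<phi> \<gamma> R T \<xi> \<theta>1) (\<lambda>\<theta>. errM S \<mu> d \<phi> \<theta>s \<theta>)
       \<le> 100 * (1 + ln (real T) + ln (real (tau_mix S P Rw \<mu>))) ^ 1 *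
          ((rmax + 2 * R) * R * sqrt (real (tau_mix S P Rw \<mu>)) / ((1 - \<gamma>) * sqrt (real T)))"
    using expected_error_rate[OF \<open>0 < T\<close> \<open>set_pmf \<xi> \<subseteq> S\<close> \<open>\<theta>1 \<in> Kball d R\<close>] by simp
qed

end
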